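(* Let $\mathbb{X}$ be a Euclidean space, $f:\mathbb{X}\to\mathbb{R}$ and $G:\mathbb{X}\to\mathbb{S}^n$ twice continuously differentiable, and consider $\min_x f(x)+\delta_{\mathbb{S}^n_+}(G(x))$. Let $\bar x$ be a stationary point and $\overline{Y}\in\mathcal{M}(\bar x)$. Let $A=G(\bar x)+\overline{Y}$ have eigenvalue decomposition $A=P\Lambda(A)P^T$ with $P=[P_\alpha\ P_\beta\ P_\gamma]$ orthogonal, where $\alpha,\beta,\gamma$ are the index sets of positive, zero and negative eigenvalues of $A$. Then there exists $q\in{\rm quad}\,\delta_{\mathbb{S}^n_+}(G(\bar x)\mid\overline{Y})$ such that for all $H\in\mathbb{S}^n$, $$q(H)=-\tfrac12\varUpsilon_{G(\bar x)}(\overline{Y},H)+\delta_{{\rm aff}\,\mathcal{C}_{\mathbb{S}^n_+}(G(\bar x),\overline{Y})}(H)=\sum_{i\in\alpha,\,j\in\gamma}\frac{-\lambda_j(A)}{\lambda_i(A)}(\widetilde H_{ij})^2+\delta_{{\rm aff}\,\mathcal{C}_{\mathbb{S}^n_+}(G(\bar x),\overline{Y})}(H),$$ where $\widetilde H=P^THP$.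
   Context: $\mathbb{S}^n$ is the space of real symmetric $n\times n$ matrices with the Frobenius inner product, $\mathbb{S}^n_+$ ($\mathbb{S}^n_-$) the cone of positive (negative) semidefinite matrices, $\delta_C$ the indicator function of a set $C$ (0 on $C$, $+\infty$ off $C$). $L(x,Y)=f(x)+\langle Y,G(x)\rangle$. $\mathcal{M}(\bar x)=\{Y\in\mathbb{S}^n\mid L_x'(\bar x,Y)=0,\ G(\bar x)\in\mathbb{S}^n_+,\ Y\in\mathbb{S}^n_-,\ \langle G(\bar x),Y\rangle=0\}$, and $\bar x$ is stationary if this set is nonempty. $\lambda_1(A)\ge\dots\ge\lambda_n(A)$ are the eigenvalues of $A$. The affine hull of the critical cone is ${\rm aff}\,\mathcal{C}_{\mathbb{S}^n_+}(G(\bar x),\overline{Y})=\{H\in\mathbb{S}^n\mid P_\beta^THP_\gamma=0,\ P_\gamma^THP_\gamma=0\}$. The $\sigma$-term is $\varUpsilon_{G(\bar x)}(\overline{Y},H)=2\langle\overline{Y},HG(\bar x)^{\dagger}H\rangle$, with $G(\bar x)^\dagger$ the Moore–Penrose pseudo-inverse. Second subderivative: for $g:\mathbb{Y}\to(-\infty,\infty]$ finite at $\bar z$ and $v\in\mathbb{Y}$, $\Delta_t^2g(\bar z\mid v)(u)=\frac{g(\bar z+tu)-g(\bar z)-t\langle v,u\rangle}{t^2/2}$ and $d^2g(\bar z\mid v)(w)=\liminf_{t\downarrow0,u\to w}\Delta_t^2g(\bar z\mid v)(u)$; $g$ is twice epi-differentiable at $\bar z$ for $v$ if $\Delta_t^2g(\bar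 z\mid v)$ epi-converges to $d^2g(\bar z\mid v)$ as $t\downarrow0$. A set-valued map $\mathcal{R}$ is generalized linear if its graph is a linear subspace. A function $q$ is a generalized quadratic form if $q(0)=0$ and $\partial q$ is generalized linear. $g$ is generalized twice differentiable at $z$ for $v$ if it is twice epi-differentiable there and $d^2g(z\mid v)$ is a generalized quadratic form. The quadratic bundle ${\rm quad}\,g(\bar z\mid\bar v)$ is the set of generalized quadratic forms $q$ for which there exist $(z^k,v^k)\to(\bar z,\bar v)$ with $g$ generalized twice differentiable at $z^k$ for $v^k$ and $\frac12 d^2g(z^k\mid v^k)$ epi-converging to $q$. *)

theory Defs
  imports "HOL-Analysis.Analysis" "HOL-Library.Liminf_Limsup"
begin

text \<open>Symmetric matrices; the Frobenius inner product on real^'n^'n is the library inner product.\<close>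
definition sym_mats :: "(real^'n^'n) set" where
  "sym_mats = {A. transpose A = A}"

definition psd_cone :: "(real^'n^'n) set" where
  "psd_cone = {A. transpose A = A \<and> (\<forall>x. 0 \<le> x \<bullet> (A *v x))}"

definition nsd_cone :: "(real^'n^'n) set" where
  "nsd_cone = {A. transpose A = A \<and> (\<forall>x. x \<bullet> (A *v x) \<le> 0)}"

definition diag_mat :: "('n::finite \<Rightarrow> real) \<Rightarrow> real^'n^'n" where
  "diag_mat d = (\<chi> i j. if i = j then d i else 0)"

definition pinv :: "real^'n^'n \<Rightarrow> real^'n^'n" where
  "pinv M = (THE X. M ** X ** M = M \<and> X ** M ** X = X \<and>
                    transpose (M ** X) = M ** X \<and> transpose (X ** M) = X ** M)"

definition sigma_term :: "real^'n^'n \<Rightarrow> real^'n^'n \<Rightarrow> real^'n^'n \<Rightarrow> real" where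
  "sigma_term X Y H = 2 * (Y \<bullet> (H ** pinv X ** H))"

definition indicator_fun :: "'a set \<Rightarrow> 'a \<Rightarrow> ereal" where
  "indicator_fun C x = (if x \<in> C then 0 else \<infinity>)"

text \<open>All variational notions are taken relative to an ambient Euclidean space given as a
  linear subspace V of a real inner product space (here V = S^n).\<close>

definition epi_conv_seq :: "'b::real_normed_vector set \<Rightarrow> (nat \<Rightarrow> 'b \<Rightarrow> ereal) \<Rightarrow> ('b \<Rightarrow> ereal) \<Rightarrow> bool" where
  "epi_conv_seq V F f \<longleftrightarrow>
     (\<forall>x\<in>V. (\<forall>xs. (\<forall>k. xs k \<in> V) \<and> xs \<longlonglongrightarrow> x \<longrightarrow> f x \<le> liminf (\<lambda>k. F k (xs k))) \<and>
            (\<exists>xs. (\<forall>k. xs k \<in> V) \<and> xs \<longlonglongrightarrow> x \<and> limsup (\<lambda>k. F k (xs k)) \<le> f x))"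

definition epi_conv_at0 :: "'b::real_normed_vector set \<Rightarrow> (real \<Rightarrow> 'b \<Rightarrow> ereal) \<Rightarrow> ('b \<Rightarrow> ereal) \<Rightarrow> bool" where
  "epi_conv_at0 V F f \<longleftrightarrow>
     (\<forall>ts. (\<forall>k. 0 < ts k) \<and> ts \<longlonglongrightarrow> 0 \<longrightarrow> epi_conv_seq V (\<lambda>k. F (ts k)) f)"

definition second_diff_quot :: "('b::real_inner \<Rightarrow> ereal) \<Rightarrow> 'b \<Rightarrow> 'b \<Rightarrow> real \<Rightarrow> 'b \<Rightarrow> ereal" where
  "second_diff_quot g z v t u = (g (z + t *\<^sub>R u) - g z - ereal (t * (v \<bullet> u))) / ereal (t\<^sup>2 / 2)"

definition second_subderiv :: "'b::real_inner set \<Rightarrow> ('b \<Rightarrow> ereal) \<Rightarrow> 'b \<Rightarrow> 'b \<Rightarrow> 'b \<Rightarrow> ereal" where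
  "second_subderiv V g z v w =
     Liminf (at_right 0 \<times>\<^sub>F inf (nhds w) (principal V)) (\<lambda>(t, u). second_diff_quot g z v t u)"

definition twice_epi_diff :: "'b::real_inner set \<Rightarrow> ('b \<Rightarrow> ereal) \<Rightarrow> 'b \<Rightarrow> 'b \<Rightarrow> bool" where
  "twice_epi_diff V g z v \<longleftrightarrow> z \<in> V \<and> v \<in> V \<and> \<bar>g z\<bar> \<noteq> \<infinity> \<and>
     epi_conv_at0 V (second_diff_quot g z v) (second_subderiv V g z v)"

definition reg_subgrad :: "'b::real_inner set \<Rightarrow> ('b \<Rightarrow> ereal) \<Rightarrow> 'b \<Rightarrow> 'b \<Rightarrow> bool" where
  "reg_subgrad V q x v \<longleftrightarrow> x \<in> V \<and> v \<in> V \<and> \<bar>q x\<bar> \<noteq> \<infinity> \<and>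
     0 \<le> Liminf (at x within V) (\<lambda>y. (q y - q x - ereal (v \<bullet> (y - x))) / ereal (norm (y - x)))"

definition subdiff :: "'b::real_inner set \<Rightarrow> ('b \<Rightarrow> ereal) \<Rightarrow> 'b \<Rightarrow> 'b set" where
  "subdiff V q x = {v. x \<in> V \<and> \<bar>q x\<bar> \<noteq> \<infinity> \<and>
     (\<exists>xs vs. (\<forall>k. reg_subgrad V q (xs k) (vs k)) \<and> xs \<longlonglongrightarrow> x \<and>
              (\<lambda>k. q (xs k)) \<longlonglongrightarrow> q x \<and> vs \<longlonglongrightarrow> v)}"

definition generalized_linear :: "('b::real_vector \<Rightarrow> 'b set) \<Rightarrow> bool" where
  "generalized_linear R \<longleftrightarrow> subspace {(x, v). v \<in> R x}"

definition gen_quad_form :: "'b::real_inner set \<Rightarrow> ('b \<Rightarrow> ereal) \<Rightarrow> bool" where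
  "gen_quad_form V q \<longleftrightarrow> q 0 = 0 \<and> generalized_linear (subdiff V q)"

definition gen_twice_diff :: "'b::real_inner set \<Rightarrow> ('b \<Rightarrow> ereal) \<Rightarrow> 'b \<Rightarrow> 'b \<Rightarrow> bool" where
  "gen_twice_diff V g z v \<longleftrightarrow> twice_epi_diff V g z v \<and> gen_quad_form V (second_subderiv V g z v)"

definition quad_bundle :: "'b::real_inner set \<Rightarrow> ('b \<Rightarrow> ereal) \<Rightarrow> 'b \<Rightarrow> 'b \<Rightarrow> ('b \<Rightarrow> ereal) set" where
  "quad_bundle V g zb vb = {q. gen_quad_form V q \<and>
     (\<exists>zs vs. zs \<longlonglongrightarrow> zb \<and> vs \<longlonglongrightarrow> vb \<and> (\<forall>k. gen_twice_diff V g (zs k) (vs k)) \<and>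
        epi_conv_seq V (\<lambda>k w. ereal (1/2) * second_subderiv V g (zs k) (vs k) w) q)}"

definition C2 :: "('a::real_normed_vector \<Rightarrow> 'b::real_normed_vector) \<Rightarrow> bool" where
  "C2 f \<longleftrightarrow> (\<exists>f' f''. (\<forall>x. (f has_derivative blinfun_apply (f' x)) (at x)) \<and>
                     (\<forall>x. (f' has_derivative blinfun_apply (f'' x)) (at x)) \<and>
                     continuous_on UNIV f'')"

definition multipliers :: "('a::euclidean_space \<Rightarrow> real) \<Rightarrow> ('a \<Rightarrow> real^'n^'n) \<Rightarrow> 'a \<Rightarrow> (real^'n^'n) set" where
  "multipliers f G xb = {Y. transpose Y = Y \<and>
      ((\<lambda>x. f x + Y \<bullet> G x) has_derivative (\<lambda>h. 0)) (at xb) \<and>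
      G xb \<in> psd_cone \<and> Y \<in> nsd_cone \<and> G xb \<bullet> Y = 0}"

definition stationary :: "('a::euclidean_space \<Rightarrow> real) \<Rightarrow> ('a \<Rightarrow> real^'n^'n) \<Rightarrow> 'a \<Rightarrow> bool" where
  "stationary f G xb \<longleftrightarrow> multipliers f G xb \<noteq> {}"

text \<open>Affine hull of the critical cone, given via the eigenvector blocks:
  P_beta^T H P_gamma = 0 and P_gamma^T H P_gamma = 0.\<close>
definition aff_crit_cone :: "real^'n^'n \<Rightarrow> ('n \<Rightarrow> real) \<Rightarrow> (real^'n^'n) set" where
  "aff_crit_cone P lam = {H \<in> sym_mats. \<forall>i j. lam j < 0 \<longrightarrow> lam i \<le> 0 \<longrightarrow>
       (transpose P ** H ** P) $ i $ j = 0}"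

end

theory Submission
  imports Defs
begin

(* Complementarity of G(xb) and Yb forces G(xb) = P diag(max lam 0) P^T and
   Yb = P diag(min lam 0) P^T.  Replacing the zero eigenvalues by 1/(k+1) gives
   Z_k -> G(xb) with (Z_k, Yb) strictly complementary.  At a strictly complementary
   pair (P diag z P^T, P diag m P^T) the indicator of the psd cone is generalized
   twice differentiable: its second subderivative is sum of (-2 m_j / z_i) W~_ij^2
   over z_i > 0 > m_j (where W~ = P^T W P), restricted to the subspace W~_ij = 0
   (m_i, m_j < 0).  The
   lower estimate is a Schur complement argument for Z + tU psd, and the recovery
   sequence W + tK comes from writing Z + tW + t^2 K as a congruence of diag z.
   As k -> oo, half of these forms epi-converge to sum of (-lam_j / lam_i) W~_ij^2
   over lam_i > 0 > lam_j on aff C, because the weights on the entries with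
   lam_i = 0 blow up; evaluating the pseudo-inverse in the eigenbasis identifies
   this form with -sigma/2 + indicator of aff C. *)

section \<open>Matrices in an orthonormal basis\<close>

definition in_basis :: "real^'n^'n \<Rightarrow> real^'n^'n \<Rightarrow> real^'n^'n" where
  "in_basis P H = transpose P ** H ** P"

lemma orthogonal_matrixD:
  assumes "orthogonal_matrix (P::real^'n^'n)"
  shows "transpose P ** P = mat 1" "P ** transpose P = mat 1"
  using assms unfolding orthogonal_matrix_def by auto

lemma conj_in_basis:
  assumes "orthogonal_matrix P"
  shows "P ** in_basis P H ** transpose P = H"
proof -
  have "P ** in_basis P H ** transpose P = (P ** transpose P) ** H ** (P ** transpose P)"
    by (simp add: in_basis_def matrix_mul_assoc)
  then show ?thesis using orthogonal_matrixD[OF assms] by simp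
qed

lemma in_basis_conj:
  assumes "orthogonal_matrix P"
  shows "in_basis P (P ** D ** transpose P) = D"
proof -
  have "in_basis P (P ** D ** transpose P) = (transpose P ** P) ** D ** (transpose P ** P)"
    by (simp add: in_basis_def matrix_mul_assoc)
  then show ?thesis using orthogonal_matrixD[OF assms] by simp
qed

lemma in_basis_inj:
  assumes "orthogonal_matrix P" and "in_basis P A = in_basis P B"
  shows "A = B"
  by (metis assms conj_in_basis)

lemma in_basis_entry:
  "in_basis P H $ i $ j = (\<Sum>a\<in>UNIV. \<Sum>b\<in>UNIV. P$a$i * H$a$b * P$b$j)"
proof -
  have "in_basis P H $ i $ j = (\<Sum>b\<in>UNIV. (\<Sum>a\<in>UNIV. P$a$i * H$a$b) * P$b$j)"
    by (simp add: in_basis_def matrix_matrix_mult_def transpose_def)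
  also have "\<dots> = (\<Sum>b\<in>UNIV. \<Sum>a\<in>UNIV. P$a$i * H$a$b * P$b$j)"
    by (simp add: sum_distrib_right)
  also have "\<dots> = (\<Sum>a\<in>UNIV. \<Sum>b\<in>UNIV. P$a$i * H$a$b * P$b$j)"
    by (rule sum.swap)
  finally show ?thesis .
qed

lemma in_basis_add: "in_basis P (H + K) = in_basis P H + in_basis P K"
  by (simp add: vec_eq_iff in_basis_entry algebra_simps sum.distrib)

lemma in_basis_scaleR: "in_basis P (c *\<^sub>R H) = c *\<^sub>R in_basis P H"
  by (simp add: in_basis_def matrix_scalar_ac scalar_matrix_assoc)

lemma in_basis_0 [simp]: "in_basis P 0 = 0"
  by (simp add: in_basis_def)

lemma tendsto_in_basis_entry:
  "(X \<longlongrightarrow> H) F \<Longrightarrow> ((\<lambda>x. in_basis P (X x) $ i $ j) \<longlongrightarrow> in_basis P H $ i $ j) F"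
  unfolding in_basis_entry by (intro tendsto_intros)

lemma sym_mats_iff: "H \<in> sym_mats \<longleftrightarrow> (\<forall>i j. H$i$j = H$j$i)"
  unfolding sym_mats_def by (auto simp: vec_eq_iff transpose_def)

lemma subspace_sym_mats: "subspace sym_mats"
  unfolding subspace_def by (auto simp: sym_mats_iff)

lemma psd_cone_sym_mats: "psd_cone \<subseteq> sym_mats"
  unfolding psd_cone_def sym_mats_def by blast

lemma in_basis_sym:
  assumes "H \<in> sym_mats"
  shows "in_basis P H $ i $ j = in_basis P H $ j $ i"
proof -
  have "transpose (in_basis P H) = in_basis P H"
    using assms by (simp add: in_basis_def sym_mats_def matrix_transpose_mul matrix_mul_assoc)
  then have "transpose (in_basis P H) $ j $ i = in_basis P H $ j $ i" by simp
  then show ?thesis by (simp add: transpose_def)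
qed

lemma inner_eq_trace: "(A::real^'n^'n) \<bullet> B = trace (transpose A ** B)"
proof -
  have "A \<bullet> B = (\<Sum>i\<in>UNIV. \<Sum>k\<in>UNIV. A$i$k * B$i$k)"
    by (simp add: inner_vec_def)
  also have "\<dots> = (\<Sum>k\<in>UNIV. \<Sum>i\<in>UNIV. A$i$k * B$i$k)"
    by (rule sum.swap)
  finally show ?thesis by (simp add: trace_def matrix_matrix_mult_def transpose_def)
qed

lemma in_basis_inner:
  assumes "orthogonal_matrix P"
  shows "in_basis P A \<bullet> in_basis P B = A \<bullet> B"
proof -
  have "transpose (in_basis P A) ** in_basis P B
      = transpose P ** (transpose A ** (P ** transpose P) ** B) ** P"
    by (simp add: in_basis_def matrix_transpose_mul matrix_mul_assoc)
  also have "\<dots> = transpose P ** (transpose A ** B ** P)"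
    using orthogonal_matrixD[OF assms] by (simp add: matrix_mul_assoc)
  finally have "trace (transpose (in_basis P A) ** in_basis P B)
      = trace ((transpose A ** B ** P) ** transpose P)"
    using trace_mul_sym by metis
  also have "\<dots> = trace (transpose A ** B)"
    using orthogonal_matrixD[OF assms] by (simp add: matrix_mul_assoc[symmetric])
  finally show ?thesis by (simp add: inner_eq_trace)
qed

lemma inner_matrix_vector_in_basis:
  "(P *v y) \<bullet> (M *v (P *v y)) = y \<bullet> (in_basis P M *v y)"
proof -
  have "(P *v y) \<bullet> (M *v (P *v y)) = y \<bullet> (transpose P *v (M *v (P *v y)))"
    using dot_lmul_matrix[of y "transpose P"] by simp
  then show ?thesis by (simp add: in_basis_def matrix_vector_mul_assoc matrix_mul_assoc)
qed

lemma psd_cone_in_basis: "M \<in> psd_cone \<Longrightarrow> 0 \<le> y \<bullet> (in_basis P M *v y)"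
  unfolding psd_cone_def inner_matrix_vector_in_basis[symmetric] by blast

lemma nsd_cone_in_basis: "M \<in> nsd_cone \<Longrightarrow> y \<bullet> (in_basis P M *v y) \<le> 0"
  unfolding nsd_cone_def inner_matrix_vector_in_basis[symmetric] by blast

lemma quadratic_form_expand: "y \<bullet> (M *v y) = (\<Sum>a\<in>UNIV. \<Sum>b\<in>UNIV. y$a * M$a$b * y$b)"
  by (simp add: inner_vec_def matrix_vector_mult_def sum_distrib_left mult_ac)

lemma inner_axis_matrix_axis: "axis a (1::real) \<bullet> (M *v axis b 1) = M$a$b"
  by (simp add: inner_axis' matrix_vector_mult_basis column_def)

lemma diag_mat_entry [simp]: "diag_mat d $ i $ j = (if i = j then d i else 0)"
  by (simp add: diag_mat_def)

lemma diag_mat_mult: "diag_mat a ** diag_mat b = diag_mat (\<lambda>i. a i * b i)"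
proof -
  have "(\<Sum>k\<in>UNIV. (if i = k then a i else 0) * (if k = j then b k else 0))
      = (if i = j then a i * b i else 0)" for i j
    by (subst sum.cong[OF refl, where h = "\<lambda>k. if k = i then (if i = j then a i * b i else 0) else 0"])
      auto
  then show ?thesis by (simp add: vec_eq_iff matrix_matrix_mult_def)
qed

lemma transpose_diag_mat [simp]: "transpose (diag_mat d) = diag_mat d"
  by (simp add: vec_eq_iff transpose_def)

lemma inner_diag_mat: "diag_mat m \<bullet> (U::real^'n^'n) = (\<Sum>j\<in>UNIV. m j * U $ j $ j)"
proof -
  have "(\<Sum>k\<in>UNIV. (if j = k then m j else 0) * U $ j $ k) = m j * U $ j $ j" for j
    by (subst sum.cong[OF refl, where h = "\<lambda>k. if k = j then m j * U $ j $ j else 0"]) auto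
  then show ?thesis by (simp add: inner_vec_def)
qed

lemma diag_mat_mult_vector: "(diag_mat d *v y) $ a = d a * y $ a"
proof -
  have "(\<Sum>j\<in>UNIV. (if a = j then d a else 0) * y $ j) = d a * y $ a"
    by (subst sum.cong[OF refl, where h = "\<lambda>j. if j = a then d a * y $ a else 0"]) auto
  then show ?thesis by (simp add: matrix_vector_mult_def)
qed

lemma quadratic_form_diag_mat: "y \<bullet> (diag_mat d *v y) = (\<Sum>a\<in>UNIV. d a * (y$a)\<^sup>2)"
  by (simp add: inner_vec_def diag_mat_mult_vector power2_eq_square mult_ac)

lemma inner_conj_diag_mat:
  assumes "orthogonal_matrix P"
  shows "(P ** diag_mat m ** transpose P) \<bullet> U = (\<Sum>j\<in>UNIV. m j * in_basis P U $ j $ j)"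
  using in_basis_inner[OF assms, of "P ** diag_mat m ** transpose P" U]
  by (simp add: in_basis_conj[OF assms] inner_diag_mat)

lemma congruent_diag_psd:
  fixes C :: "real^'n^'n"
  assumes "\<And>i. 0 \<le> d i"
  shows "transpose C ** diag_mat d ** C \<in> psd_cone"
proof -
  have "x \<bullet> ((transpose C ** diag_mat d ** C) *v x) = (C *v x) \<bullet> (diag_mat d *v (C *v x))" for x
    using inner_matrix_vector_in_basis[of C x "diag_mat d"] by (simp add: in_basis_def)
  moreover have "0 \<le> y \<bullet> (diag_mat d *v y)" for y
    unfolding quadratic_form_diag_mat using assms by (intro sum_nonneg mult_nonneg_nonneg) auto
  ultimately show ?thesis
    unfolding psd_cone_def by (simp add: matrix_transpose_mul matrix_mul_assoc)
qed

lemma conj_diag_psd: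
  assumes "\<And>i. 0 \<le> d i"
  shows "(P::real^'n^'n) ** diag_mat d ** transpose P \<in> psd_cone"
  using congruent_diag_psd[of d "transpose P"] assms by simp

lemma conj_diag_sym: "(P::real^'n^'n) ** diag_mat d ** transpose P \<in> sym_mats"
  unfolding sym_mats_def by (simp add: matrix_transpose_mul matrix_mul_assoc)

section \<open>Complementary pairs and the sigma-term\<close>

lemma complementary_pair_in_basis:
  fixes P G Y :: "real^'n^'n"
  assumes P: "orthogonal_matrix P" and G: "G \<in> psd_cone" and Y: "Y \<in> nsd_cone"
    and GY: "G \<bullet> Y = 0" and sum: "G + Y = P ** diag_mat lam ** transpose P"
  shows "in_basis P G = diag_mat (\<lambda>i. max (lam i) 0)" "in_basis P Y = diag_mat (\<lambda>i. min (lam i) 0)"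
proof -
  define Gt where "Gt = in_basis P G"
  define Yt where "Yt = in_basis P Y"
  have sum_entry: "Gt $ i $ j + Yt $ i $ j = (if i = j then lam i else 0)" for i j
  proof -
    have "Gt + Yt = diag_mat lam"
      unfolding Gt_def Yt_def in_basis_add[symmetric] sum in_basis_conj[OF P] ..
    then show ?thesis by (metis diag_mat_entry vector_add_component)
  qed
  have Gdiag: "0 \<le> Gt $ i $ i" for i
    using psd_cone_in_basis[OF G, of "axis i 1" P] by (simp add: Gt_def inner_axis_matrix_axis)
  have Ydiag: "Yt $ i $ i \<le> 0" for i
    using nsd_cone_in_basis[OF Y, of "axis i 1" P] by (simp add: Yt_def inner_axis_matrix_axis)
  \<comment> \<open>Off the diagonal Yt = -Gt, so every product Gt_ij Yt_ij is nonpositive while they sum to 0.\<close>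
  have prod_nonpos: "Gt $ i $ j * Yt $ i $ j \<le> 0" for i j
  proof (cases "i = j")
    case True then show ?thesis using Gdiag[of i] Ydiag[of i] by (simp add: mult_nonneg_nonpos)
  next
    case False
    then have "Yt $ i $ j = - Gt $ i $ j" using sum_entry[of i j] by simp
    then show ?thesis by simp
  qed
  have "(\<Sum>i\<in>UNIV. \<Sum>j\<in>UNIV. - (Gt $ i $ j * Yt $ i $ j)) = 0"
    using GY in_basis_inner[OF P, of G Y] by (simp add: Gt_def Yt_def inner_vec_def sum_negf)
  then have prod_zero: "Gt $ i $ j * Yt $ i $ j = 0" for i j
    using prod_nonpos by (simp add: sum_nonneg_eq_0_iff sum_nonneg)
  have entries: "Gt $ i $ j = (if i = j then max (lam i) 0 else 0) \<and>
      Yt $ i $ j = (if i = j then min (lam i) 0 else 0)" for i j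
    using sum_entry[of i j] prod_zero[of i j] Gdiag[of i] Ydiag[of i]
    by (cases "i = j") (auto simp: max_def min_def)
  show "in_basis P G = diag_mat (\<lambda>i. max (lam i) 0)" using entries by (simp add: vec_eq_iff Gt_def)
  show "in_basis P Y = diag_mat (\<lambda>i. min (lam i) 0)" using entries by (simp add: vec_eq_iff Yt_def)
qed

lemma penrose_equations_unique:
  fixes M X Y :: "real^'n^'n"
  assumes X1: "M ** X ** M = M" and X2: "X ** M ** X = X"
    and X3: "transpose (M ** X) = M ** X" and X4: "transpose (X ** M) = X ** M"
    and Y1: "M ** Y ** M = M" and Y2: "Y ** M ** Y = Y"
    and Y3: "transpose (M ** Y) = M ** Y" and Y4: "transpose (Y ** M) = Y ** M"
  shows "X = Y"
proof -
  have tM_Y: "transpose M = transpose M ** transpose Y ** transpose M"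
    using arg_cong[OF Y1, of transpose] by (simp add: matrix_transpose_mul matrix_mul_assoc)
  have tM_X: "transpose M = transpose M ** transpose X ** transpose M"
    using arg_cong[OF X1, of transpose] by (simp add: matrix_transpose_mul matrix_mul_assoc)
  have "X = X ** transpose (M ** X)" using X2 X3 by (simp add: matrix_mul_assoc)
  also have "\<dots> = X ** transpose X ** (transpose M ** transpose Y ** transpose M)"
    using tM_Y by (simp add: matrix_transpose_mul matrix_mul_assoc)
  also have "\<dots> = X ** transpose (M ** X) ** transpose (M ** Y)"
    by (simp add: matrix_transpose_mul matrix_mul_assoc)
  also have "\<dots> = (X ** M ** X) ** M ** Y" using X3 Y3 by (simp add: matrix_mul_assoc)
  finally have X_eq: "X = X ** M ** Y" using X2 by simp
  have "Y = transpose (Y ** M) ** Y" using Y2 Y4 by simp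
  also have "\<dots> = (transpose M ** transpose X ** transpose M) ** transpose Y ** Y"
    using tM_X by (simp add: matrix_transpose_mul)
  also have "\<dots> = transpose (X ** M) ** transpose (Y ** M) ** Y"
    by (simp add: matrix_transpose_mul matrix_mul_assoc)
  also have "\<dots> = X ** M ** (Y ** M ** Y)" using X4 Y4 by (simp add: matrix_mul_assoc)
  finally show ?thesis using X_eq Y2 by simp
qed

lemma conj_mult_conj:
  fixes P :: "real^'n^'n"
  assumes "orthogonal_matrix P"
  shows "(P ** A ** transpose P) ** (P ** B ** transpose P) = P ** (A ** B) ** transpose P"
proof -
  have "(P ** A ** transpose P) ** (P ** B ** transpose P) = P ** A ** (transpose P ** P) ** B ** transpose P"
    by (simp add: matrix_mul_assoc)
  then show ?thesis using orthogonal_matrixD[OF assms] by (simp add: matrix_mul_assoc)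
qed

lemma transpose_conj:
  fixes P :: "real^'n^'n"
  shows "transpose (P ** A ** transpose P) = P ** transpose A ** transpose P"
  by (simp add: matrix_transpose_mul matrix_mul_assoc)

lemma pinv_conj_diag_mat:
  assumes P: "orthogonal_matrix P"
  shows "pinv (P ** diag_mat d ** transpose P) =
    P ** diag_mat (\<lambda>i. if d i = 0 then 0 else 1 / d i) ** transpose P"
proof -
  define e where "e = (\<lambda>i. if d i = 0 then 0 else 1 / d i)"
  define M where "M = P ** diag_mat d ** transpose P"
  define X where "X = P ** diag_mat e ** transpose P"
  have "(\<lambda>i. d i * e i * d i) = d" "(\<lambda>i. e i * d i * e i) = e" "(\<lambda>i. d i * e i) = (\<lambda>i. e i * d i)"
    by (auto simp: e_def)
  then have penrose: "M ** X ** M = M \<and> X ** M ** X = X \<and>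
      transpose (M ** X) = M ** X \<and> transpose (X ** M) = X ** M"
    unfolding M_def X_def conj_mult_conj[OF P] diag_mat_mult transpose_conj by simp
  have "pinv M = X"
    unfolding pinv_def using penrose penrose_equations_unique[of M _ X] by (intro the_equality) blast+
  then show ?thesis unfolding M_def X_def e_def .
qed

lemma in_basis_mult_conj:
  fixes P :: "real^'n^'n"
  shows "in_basis P (H ** (P ** D ** transpose P) ** H) = in_basis P H ** D ** in_basis P H"
  by (simp add: in_basis_def matrix_mul_assoc)

lemma diag_congruence_diag_entry:
  assumes "Ht \<in> sym_mats"
  shows "(Ht ** diag_mat e ** Ht) $ j $ j = (\<Sum>i\<in>UNIV. e i * (Ht $ i $ j)\<^sup>2)"
proof -
  have "(Ht ** diag_mat e) $ j $ i = Ht $ j $ i * e i" for i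
  proof -
    have "(\<Sum>k\<in>UNIV. Ht $ j $ k * (if k = i then e k else 0)) = Ht $ j $ i * e i"
      by (subst sum.cong[OF refl, where h = "\<lambda>k. if k = i then Ht $ j $ i * e i else 0"]) auto
    then show ?thesis by (simp add: matrix_matrix_mult_def)
  qed
  then show ?thesis
    using assms by (simp add: matrix_matrix_mult_def sym_mats_iff power2_eq_square mult_ac)
qed

lemma sigma_term_complementary_pair:
  fixes P H :: "real^'n^'n"
  assumes P: "orthogonal_matrix P" and H: "H \<in> sym_mats"
  shows "- (1/2) * sigma_term (P ** diag_mat (\<lambda>i. max (lam i) 0) ** transpose P)
                               (P ** diag_mat (\<lambda>i. min (lam i) 0) ** transpose P) H
       = (\<Sum>i\<in>UNIV. \<Sum>j\<in>UNIV. (if 0 < lam i \<and> lam j < 0 then - lam j / lam i else 0) *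
            (in_basis P H $ i $ j)\<^sup>2)"
proof -
  define e where "e = (\<lambda>i. if max (lam i) 0 = 0 then 0 else 1 / max (lam i) 0)"
  define Ht where "Ht = in_basis P H"
  have Ht: "Ht \<in> sym_mats" using in_basis_sym[OF H] by (simp add: Ht_def sym_mats_iff)
  have "(P ** diag_mat (\<lambda>i. min (lam i) 0) ** transpose P) \<bullet> (H ** (P ** diag_mat e ** transpose P) ** H)
      = in_basis P (P ** diag_mat (\<lambda>i. min (lam i) 0) ** transpose P) \<bullet>
        in_basis P (H ** (P ** diag_mat e ** transpose P) ** H)"
    by (rule in_basis_inner[OF P, symmetric])
  also have "\<dots> = diag_mat (\<lambda>i. min (lam i) 0) \<bullet> (Ht ** diag_mat e ** Ht)"
    unfolding Ht_def in_basis_conj[OF P] in_basis_mult_conj ..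
  also have "\<dots> = (\<Sum>j\<in>UNIV. \<Sum>i\<in>UNIV. min (lam j) 0 * e i * (Ht $ i $ j)\<^sup>2)"
    unfolding inner_diag_mat diag_congruence_diag_entry[OF Ht] by (simp add: sum_distrib_left mult.assoc)
  finally have inner_eq: "(P ** diag_mat (\<lambda>i. min (lam i) 0) ** transpose P) \<bullet>
      (H ** (P ** diag_mat e ** transpose P) ** H) =
      (\<Sum>j\<in>UNIV. \<Sum>i\<in>UNIV. min (lam j) 0 * e i * (Ht $ i $ j)\<^sup>2)" .
  have "- (1/2) * sigma_term (P ** diag_mat (\<lambda>i. max (lam i) 0) ** transpose P)
                               (P ** diag_mat (\<lambda>i. min (lam i) 0) ** transpose P) H
     = - (\<Sum>j\<in>UNIV. \<Sum>i\<in>UNIV. min (lam j) 0 * e i * (Ht $ i $ j)\<^sup>2)"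
    unfolding sigma_term_def pinv_conj_diag_mat[OF P] e_def[symmetric] inner_eq by simp
  also have "\<dots> = (\<Sum>i\<in>UNIV. \<Sum>j\<in>UNIV. - (min (lam j) 0 * e i) * (Ht $ i $ j)\<^sup>2)"
    by (subst sum.swap) (simp add: sum_negf)
  also have "\<dots> = (\<Sum>i\<in>UNIV. \<Sum>j\<in>UNIV. (if 0 < lam i \<and> lam j < 0 then - lam j / lam i else 0) *
      (Ht $ i $ j)\<^sup>2)"
    by (intro sum.cong refl) (auto simp: e_def min_def max_def)
  finally show ?thesis unfolding Ht_def .
qed

section \<open>Restricted quadratic forms are generalized quadratic forms\<close>

lemma bilinear_sym_add_self:
  fixes B :: "'a::real_vector \<Rightarrow> 'a \<Rightarrow> real"
  assumes "bilinear B" and "\<And>x y. B x y = B y x"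
  shows "B (x + h) (x + h) = B x x + 2 * B x h + B h h"
  using assms(2)[of h x] by (simp add: bilinear_ladd[OF assms(1)] bilinear_radd[OF assms(1)])

lemma filterlim_ray_at_within:
  fixes x h :: "'b::real_normed_vector"
  assumes "h \<noteq> 0" and "\<And>s. 0 < s \<Longrightarrow> x + s *\<^sub>R h \<in> V"
  shows "filterlim (\<lambda>s. x + s *\<^sub>R h) (at x within V) (at_right 0)"
  unfolding filterlim_at
proof
  show "eventually (\<lambda>s. x + s *\<^sub>R h \<in> V \<and> x + s *\<^sub>R h \<noteq> x) (at_right 0)"
    using eventually_at_right_less[of "0::real"] by eventually_elim (use assms in auto)
  have "((\<lambda>s. x + s *\<^sub>R h) \<longlongrightarrow> x + 0 *\<^sub>R h) (at_right 0)"
    by (intro tendsto_intros)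
  then show "((\<lambda>s. x + s *\<^sub>R h) \<longlongrightarrow> x) (at_right 0)" by simp
qed

context
  fixes B :: "'b::euclidean_space \<Rightarrow> 'b \<Rightarrow> real" and V L :: "'b set" and q :: "'b \<Rightarrow> ereal"
  assumes B: "bilinear B" and B_sym: "\<And>x y. B x y = B y x" and B_nonneg: "\<And>x. 0 \<le> B x x"
    and V: "subspace V" and L: "subspace L" "L \<subseteq> V"
    and q: "\<And>x. x \<in> V \<Longrightarrow> q x = (if x \<in> L then ereal (B x x) else \<infinity>)"
begin

lemma reg_subgrad_restricted_quadratic_le:
  assumes R: "reg_subgrad V q x v" and h: "h \<in> L"
  shows "v \<bullet> h \<le> 2 * B x h"
proof (rule ccontr)
  let ?phi = "\<lambda>y. (q y - q x - ereal (v \<bullet> (y - x))) / ereal (norm (y - x))"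
  assume "\<not> ?thesis"
  then have a: "0 < v \<bullet> h - 2 * B x h" by simp
  define a where "a = v \<bullet> h - 2 * B x h"
  have "h \<noteq> 0" using a by (auto simp: bilinear_rzero[OF B])
  then have nh: "0 < norm h" by simp
  have xV: "x \<in> V" and liminf: "0 \<le> Liminf (at x within V) ?phi" and "\<bar>q x\<bar> \<noteq> \<infinity>"
    using R unfolding reg_subgrad_def by auto
  then have xL: "x \<in> L" using q[OF xV] by (auto split: if_splits)
  have ray_L: "x + s *\<^sub>R h \<in> L" for s by (intro subspace_add[OF L(1) xL] subspace_scale[OF L(1) h])
  have ray_phi: "?phi (x + s *\<^sub>R h) = ereal ((s * B h h - a) / norm h)" if "0 < s" for s
  proof -
    have "B (x + s *\<^sub>R h) (x + s *\<^sub>R h) - B x x - v \<bullet> (s *\<^sub>R h) = s * (s * B h h - a)"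
      unfolding bilinear_sym_add_self[OF B B_sym] a_def
      by (simp add: bilinear_rmul[OF B] bilinear_lmul[OF B] algebra_simps power2_eq_square)
    then show ?thesis
      using q[OF subsetD[OF L(2) ray_L]] q[OF xV] ray_L xL that nh by simp
  qed
  have "ereal (- a / (2 * norm h)) < 0" using a nh by (simp add: a_def divide_neg_pos)
  then have "eventually (\<lambda>y. ereal (- a / (2 * norm h)) < ?phi y) (at x within V)"
    using le_Liminf_iff[THEN iffD1, OF liminf] by blast
  moreover have "filterlim (\<lambda>s. x + s *\<^sub>R h) (at x within V) (at_right 0)"
    using \<open>h \<noteq> 0\<close> ray_L L(2) by (intro filterlim_ray_at_within) auto
  ultimately have "eventually (\<lambda>s. ereal (- a / (2 * norm h)) < ?phi (x + s *\<^sub>R h)) (at_right 0)"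
    by (rule eventually_compose_filterlim)
  then have above: "eventually (\<lambda>s. - a / (2 * norm h) < (s * B h h - a) / norm h) (at_right 0)"
    using eventually_at_right_less[of "0::real"] by eventually_elim (subst (asm) ray_phi, simp_all)
  have "((\<lambda>s. (s * B h h - a) / norm h) \<longlongrightarrow> (0 * B h h - a) / norm h) (at_right 0)"
    by (intro tendsto_intros) (use nh in auto)
  moreover have "(0 * B h h - a) / norm h < - a / (2 * norm h)"
    using a nh by (simp add: a_def field_simps)
  ultimately have "eventually (\<lambda>s. (s * B h h - a) / norm h < - a / (2 * norm h)) (at_right 0)"
    by (rule order_tendstoD(2))
  with above have "eventually (\<lambda>s::real. False) (at_right 0)"
    by eventually_elim simp
  then show False by simp
qed

lemma reg_subgrad_restricted_quadratic_iff:
  "reg_subgrad V q x v \<longleftrightarrow> x \<in> L \<and> v \<in> V \<and> (\<forall>h\<in>L. v \<bullet> h = 2 * B x h)"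
proof
  assume R: "reg_subgrad V q x v"
  then have xV: "x \<in> V" and "\<bar>q x\<bar> \<noteq> \<infinity>" unfolding reg_subgrad_def by auto
  then have "x \<in> L" using q[OF xV] by (auto split: if_splits)
  moreover have "v \<bullet> h = 2 * B x h" if h: "h \<in> L" for h
    using reg_subgrad_restricted_quadratic_le[OF R h]
      reg_subgrad_restricted_quadratic_le[OF R subspace_neg[OF L(1) h]]
    by (simp add: bilinear_rneg[OF B])
  ultimately show "x \<in> L \<and> v \<in> V \<and> (\<forall>h\<in>L. v \<bullet> h = 2 * B x h)"
    using R unfolding reg_subgrad_def by blast
next
  let ?phi = "\<lambda>y. (q y - q x - ereal (v \<bullet> (y - x))) / ereal (norm (y - x))"
  assume "x \<in> L \<and> v \<in> V \<and> (\<forall>h\<in>L. v \<bullet> h = 2 * B x h)"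
  then have xL: "x \<in> L" and vV: "v \<in> V" and grad: "\<forall>h\<in>L. v \<bullet> h = 2 * B x h" by auto
  have xV: "x \<in> V" using xL L(2) by blast
  have "0 \<le> ?phi y" if "y \<in> V" "y \<noteq> x" for y
  proof (cases "y \<in> L")
    case True
    then have "y - x \<in> L" by (rule subspace_diff[OF L(1) _ xL])
    then have "B y y - B x x - v \<bullet> (y - x) = B (y - x) (y - x)"
      using bilinear_sym_add_self[OF B B_sym, of x "y - x"] grad by simp
    then show ?thesis
      using q[OF that(1)] q[OF xV] True xL that(2) B_nonneg[of "y - x"] by simp
  next
    case False
    then show ?thesis using q[OF that(1)] q[OF xV] xL that(2) by simp
  qed
  then have "0 \<le> Liminf (at x within V) ?phi"
    by (intro Liminf_bounded) (auto simp: eventually_at_filter)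
  then show "reg_subgrad V q x v" unfolding reg_subgrad_def using xV vV q[OF xV] xL by simp
qed

lemma subdiff_restricted_quadratic:
  "subdiff V q x = {v. x \<in> L \<and> v \<in> V \<and> (\<forall>h\<in>L. v \<bullet> h = 2 * B x h)}"
proof (intro set_eqI iffI)
  fix v assume "v \<in> subdiff V q x"
  then obtain xs vs where xV: "x \<in> V" and fin: "\<bar>q x\<bar> \<noteq> \<infinity>"
    and R: "\<forall>k. reg_subgrad V q (xs k) (vs k)" and xs: "xs \<longlonglongrightarrow> x" and vs: "vs \<longlonglongrightarrow> v"
    unfolding subdiff_def mem_Collect_eq by (elim conjE exE) (rule that, assumption+)
  have xL: "x \<in> L" using fin q[OF xV] by (auto split: if_splits)
  have Rk: "vs k \<in> V" "\<forall>h\<in>L. vs k \<bullet> h = 2 * B (xs k) h" for k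
    using reg_subgrad_restricted_quadratic_iff[THEN iffD1, OF R[rule_format, of k]] by auto
  have "v \<in> V" by (rule closed_sequentially[OF closed_subspace[OF V] _ vs]) (simp add: Rk(1))
  moreover have "v \<bullet> h = 2 * B x h" if h: "h \<in> L" for h
  proof (rule LIMSEQ_unique)
    show "(\<lambda>k. vs k \<bullet> h) \<longlonglongrightarrow> v \<bullet> h" by (intro tendsto_intros vs)
    have "bounded_bilinear B" using bilinear_conv_bounded_bilinear B by auto
    then have "(\<lambda>k. B (xs k) h) \<longlonglongrightarrow> B x h"
      using xs by (rule bounded_bilinear.tendsto) simp
    then have "(\<lambda>k. 2 * B (xs k) h) \<longlonglongrightarrow> 2 * B x h"
      by (rule tendsto_mult_left)
    then show "(\<lambda>k. vs k \<bullet> h) \<longlonglongrightarrow> 2 * B x h" using Rk(2) h by simp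
  qed
  ultimately show "v \<in> {v. x \<in> L \<and> v \<in> V \<and> (\<forall>h\<in>L. v \<bullet> h = 2 * B x h)}" using xL by blast
next
  fix v assume v: "v \<in> {v. x \<in> L \<and> v \<in> V \<and> (\<forall>h\<in>L. v \<bullet> h = 2 * B x h)}"
  then have xV: "x \<in> V" using L(2) by blast
  have "reg_subgrad V q x v" using v reg_subgrad_restricted_quadratic_iff[THEN iffD2] by simp
  then have "\<exists>xs vs. (\<forall>k. reg_subgrad V q (xs k) (vs k)) \<and> xs \<longlonglongrightarrow> x \<and>
      (\<lambda>k. q (xs k)) \<longlonglongrightarrow> q x \<and> vs \<longlonglongrightarrow> v"
    by (intro exI[of _ "\<lambda>k. x"] exI[of _ "\<lambda>k. v"]) simp
  then show "v \<in> subdiff V q x"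
    unfolding subdiff_def using xV v q[OF xV] by simp
qed

lemma gen_quad_form_restricted_quadratic: "gen_quad_form V q"
proof -
  let ?G = "{(x, v). x \<in> L \<and> v \<in> V \<and> (\<forall>h\<in>L. v \<bullet> h = 2 * B x h)}"
  have graph: "{(x, v). v \<in> subdiff V q x} = ?G"
    using subdiff_restricted_quadratic by blast
  have "subspace ?G"
    unfolding subspace_def
  proof (intro conjI ballI allI)
    show "0 \<in> ?G"
      using subspace_0[OF L(1)] subspace_0[OF V] by (simp add: zero_prod_def bilinear_lzero[OF B])
  next
    fix p p' assume "p \<in> ?G" "p' \<in> ?G"
    then show "p + p' \<in> ?G"
      using subspace_add[OF L(1)] subspace_add[OF V]
      by (auto simp: bilinear_ladd[OF B] inner_add_left)
  next
    fix c :: real and p assume "p \<in> ?G"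
    then show "c *\<^sub>R p \<in> ?G"
      using subspace_scale[OF L(1)] subspace_scale[OF V] by (auto simp: bilinear_lmul[OF B])
  qed
  moreover have "q 0 = 0"
    using q[OF subspace_0[OF V]] subspace_0[OF L(1)] by (simp add: bilinear_lzero[OF B])
  ultimately show ?thesis unfolding gen_quad_form_def generalized_linear_def graph by blast
qed

end

definition vanishing_on :: "real^'n^'n \<Rightarrow> ('n \<Rightarrow> 'n \<Rightarrow> bool) \<Rightarrow> (real^'n^'n) set" where
  "vanishing_on P Z = {H \<in> sym_mats. \<forall>i j. Z i j \<longrightarrow> in_basis P H $ i $ j = 0}"

definition weighted_form :: "real^'n^'n \<Rightarrow> ('n \<Rightarrow> 'n \<Rightarrow> real) \<Rightarrow> real^'n^'n \<Rightarrow> real^'n^'n \<Rightarrow> real" where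
  "weighted_form P c H K = (\<Sum>i\<in>UNIV. \<Sum>j\<in>UNIV. c i j * in_basis P H $ i $ j * in_basis P K $ i $ j)"

definition weighted_sq :: "real^'n^'n \<Rightarrow> ('n \<Rightarrow> 'n \<Rightarrow> real) \<Rightarrow> real^'n^'n \<Rightarrow> real" where
  "weighted_sq P c H = (\<Sum>i\<in>UNIV. \<Sum>j\<in>UNIV. c i j * (in_basis P H $ i $ j)\<^sup>2)"

definition weighted_sq_on ::
    "real^'n^'n \<Rightarrow> ('n \<Rightarrow> 'n \<Rightarrow> bool) \<Rightarrow> ('n \<Rightarrow> 'n \<Rightarrow> real) \<Rightarrow> real^'n^'n \<Rightarrow> ereal" where
  "weighted_sq_on P Z c H = (if H \<in> vanishing_on P Z then ereal (weighted_sq P c H) else \<infinity>)"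

lemma subspace_vanishing_on: "subspace (vanishing_on P Z)"
  unfolding subspace_def vanishing_on_def sym_mats_iff by (auto simp: in_basis_add in_basis_scaleR)

lemma vanishing_on_sym_mats: "vanishing_on P Z \<subseteq> sym_mats"
  unfolding vanishing_on_def by auto

lemma vanishing_on_mono: "(\<And>i j. Z' i j \<Longrightarrow> Z i j) \<Longrightarrow> vanishing_on P Z \<subseteq> vanishing_on P Z'"
  unfolding vanishing_on_def by auto

lemma weighted_form_self: "weighted_form P c H H = weighted_sq P c H"
  unfolding weighted_form_def weighted_sq_def by (simp add: power2_eq_square mult.assoc)

lemma weighted_form_commute: "weighted_form P c H K = weighted_form P c K H"
  unfolding weighted_form_def by (simp add: mult_ac)

lemma bilinear_weighted_form: "bilinear (weighted_form P c)"
  unfolding bilinear_def weighted_form_def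
  by (auto intro!: linearI simp: in_basis_add in_basis_scaleR algebra_simps sum.distrib sum_distrib_left)

lemma weighted_sq_nonneg: "(\<And>i j. 0 \<le> c i j) \<Longrightarrow> 0 \<le> weighted_sq P c H"
  unfolding weighted_sq_def by (intro sum_nonneg mult_nonneg_nonneg) auto

lemma weighted_sq_entry_le:
  assumes "\<And>i j. 0 \<le> c i j"
  shows "c i j * (in_basis P H $ i $ j)\<^sup>2 \<le> weighted_sq P c H"
proof -
  have "c i j * (in_basis P H $ i $ j)\<^sup>2 \<le> (\<Sum>b\<in>UNIV. c i b * (in_basis P H $ i $ b)\<^sup>2)"
    using assms by (intro member_le_sum) auto
  also have "\<dots> \<le> weighted_sq P c H"
    unfolding weighted_sq_def using assms
    by (intro member_le_sum[of i UNIV "\<lambda>a. \<Sum>b\<in>UNIV. c a b * (in_basis P H $ a $ b)\<^sup>2"] sum_nonneg) auto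
  finally show ?thesis .
qed

lemma tendsto_weighted_sq: "(X \<longlongrightarrow> H) F \<Longrightarrow> ((\<lambda>x. weighted_sq P c (X x)) \<longlongrightarrow> weighted_sq P c H) F"
  unfolding weighted_sq_def by (intro tendsto_intros tendsto_in_basis_entry)

lemma gen_quad_form_weighted_sq_on:
  assumes "\<And>i j. 0 \<le> c i j" and "\<And>H. H \<in> sym_mats \<Longrightarrow> q H = weighted_sq_on P Z c H"
  shows "gen_quad_form sym_mats q"
proof (rule gen_quad_form_restricted_quadratic)
  show "bilinear (weighted_form P c)" by (rule bilinear_weighted_form)
  show "0 \<le> weighted_form P c x x" for x
    unfolding weighted_form_self using assms(1) by (rule weighted_sq_nonneg)
  show "x \<in> sym_mats \<Longrightarrow> q x = (if x \<in> vanishing_on P Z then ereal (weighted_form P c x x) else \<infinity>)"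
    for x using assms(2) by (simp add: weighted_sq_on_def weighted_form_self)
qed (auto simp: weighted_form_commute subspace_sym_mats subspace_vanishing_on vanishing_on_sym_mats)

section \<open>Second subderivatives from lower bounds and recovery sequences\<close>

lemma Liminf_le_Liminf_filterlim:
  fixes f :: "'a \<Rightarrow> 'b::complete_linorder"
  assumes "filterlim r F G"
  shows "Liminf F f \<le> Liminf G (\<lambda>x. f (r x))"
proof -
  have "Liminf F f \<le> Liminf (filtermap r G) f"
    unfolding le_Liminf_iff
  proof (intro allI impI)
    fix y assume "y < Liminf F f"
    then have "eventually (\<lambda>x. y < f x) F" by (rule less_LiminfD)
    then show "eventually (\<lambda>x. y < f x) (filtermap r G)"
      by (rule filter_leD[OF assms[unfolded filterlim_def]])
  qed
  also have "\<dots> \<le> Liminf G (\<lambda>x. f (r x))" by (rule Liminf_filtermap_le)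
  finally show ?thesis .
qed

abbreviation at_right_times_nhds :: "'b::topological_space set \<Rightarrow> 'b \<Rightarrow> (real \<times> 'b) filter" where
  "at_right_times_nhds V W \<equiv> at_right 0 \<times>\<^sub>F inf (nhds W) (principal V)"

lemma filterlim_at_right_times_nhds:
  assumes "filterlim t (at_right 0) G" and "(x \<longlongrightarrow> W) G" and "eventually (\<lambda>k. x k \<in> V) G"
  shows "filterlim (\<lambda>k. (t k, x k)) (at_right_times_nhds V W) G"
  using assms by (intro filterlim_Pair) (simp_all add: filterlim_inf filterlim_principal)

lemma at_right_times_nhds_props:
  shows "eventually (\<lambda>p. 0 < fst p \<and> snd p \<in> V) (at_right_times_nhds V W)"
    and "(fst \<longlongrightarrow> 0) (at_right_times_nhds V W)"
    and "(snd \<longlongrightarrow> W) (at_right_times_nhds V W)"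
proof -
  have fst: "filterlim fst (at_right 0) (at_right_times_nhds V W)" by (rule filterlim_fst)
  have snd: "filterlim snd (inf (nhds W) (principal V)) (at_right_times_nhds V W)" by (rule filterlim_snd)
  have "eventually (\<lambda>p. 0 < fst p) (at_right_times_nhds V W)"
    using eventually_compose_filterlim[OF eventually_at_right_less fst] .
  moreover have "eventually (\<lambda>p. snd p \<in> V) (at_right_times_nhds V W)"
    using snd unfolding filterlim_inf filterlim_principal by blast
  ultimately show "eventually (\<lambda>p. 0 < fst p \<and> snd p \<in> V) (at_right_times_nhds V W)"
    by (rule eventually_conj)
  show "(fst \<longlongrightarrow> 0) (at_right_times_nhds V W)"
    using filterlim_mono[OF fst at_within_le_nhds order_refl] by simp
  show "(snd \<longlongrightarrow> W) (at_right_times_nhds V W)"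
    using snd unfolding filterlim_inf by simp
qed

lemma filterlim_sequentially_at_right:
  assumes "\<And>k. 0 < ts k" and "ts \<longlonglongrightarrow> 0"
  shows "filterlim ts (at_right (0::real)) sequentially"
  unfolding filterlim_at using assms by (intro conjI always_eventually allI) (metis greaterThan_iff less_irrefl)+

lemma filterlim_ray_at_right_times_nhds:
  fixes W K :: "'b::real_normed_vector"
  assumes "subspace V" "W \<in> V" "K \<in> V"
  shows "filterlim (\<lambda>t. (t, W + t *\<^sub>R K)) (at_right_times_nhds V W) (at_right 0)"
proof (rule filterlim_at_right_times_nhds)
  show "filterlim (\<lambda>t. t) (at_right 0) (at_right 0)" by (rule filterlim_ident)
  have "((\<lambda>t. W + t *\<^sub>R K) \<longlongrightarrow> W + 0 *\<^sub>R K) (at_right 0)"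
    by (rule tendsto_add[OF tendsto_const tendsto_scaleR[OF tendsto_ident_at tendsto_const]])
  then show "((\<lambda>t. W + t *\<^sub>R K) \<longlongrightarrow> W) (at_right 0)" by simp
  show "eventually (\<lambda>t. W + t *\<^sub>R K \<in> V) (at_right 0)"
    using assms by (intro always_eventually) (simp add: subspace_add subspace_scale)
qed

context
  fixes V :: "'b::real_inner set" and g :: "'b \<Rightarrow> ereal" and z v :: 'b and d :: "'b \<Rightarrow> ereal"
  assumes V: "subspace V" and zV: "z \<in> V" and vV: "v \<in> V" and gz: "\<bar>g z\<bar> \<noteq> \<infinity>"
    and lower: "\<And>W y. W \<in> V \<Longrightarrow> y < d W \<Longrightarrow>
      eventually (\<lambda>(t, u). y < second_diff_quot g z v t u) (at_right_times_nhds V W)"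
    and recovery: "\<And>W. W \<in> V \<Longrightarrow> d W \<noteq> \<infinity> \<Longrightarrow>
      \<exists>K\<in>V. \<forall>t>0. second_diff_quot g z v t (W + t *\<^sub>R K) \<le> d W"
begin

lemma second_subderiv_eq_of_bounds: "W \<in> V \<Longrightarrow> second_subderiv V g z v W = d W"
proof (rule antisym)
  assume W: "W \<in> V"
  show "second_subderiv V g z v W \<le> d W"
  proof (cases "d W = \<infinity>")
    case False
    then obtain K where K: "K \<in> V" "\<forall>t>0. second_diff_quot g z v t (W + t *\<^sub>R K) \<le> d W"
      using recovery[OF W] by blast
    have "second_subderiv V g z v W \<le> Liminf (at_right 0) (\<lambda>t. second_diff_quot g z v t (W + t *\<^sub>R K))"
      unfolding second_subderiv_def
      using Liminf_le_Liminf_filterlim[OF filterlim_ray_at_right_times_nhds[OF V W K(1)],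
          where f = "\<lambda>(t, u). second_diff_quot g z v t u"] by simp
    also have "\<dots> \<le> d W"
      using K(2) by (intro Liminf_le eventually_mono[OF eventually_at_right_less]) auto
    finally show ?thesis .
  qed simp
  show "d W \<le> second_subderiv V g z v W"
    unfolding second_subderiv_def le_Liminf_iff using lower[OF W] by (simp add: case_prod_unfold)
qed

lemma twice_epi_diff_of_bounds: "twice_epi_diff V g z v"
  unfolding twice_epi_diff_def epi_conv_at0_def epi_conv_seq_def
proof (intro conjI allI impI ballI zV vV gz)
  fix ts :: "nat \<Rightarrow> real" and x xs
  assume ts: "(\<forall>k. 0 < ts k) \<and> ts \<longlonglongrightarrow> 0" and xs: "(\<forall>k. xs k \<in> V) \<and> xs \<longlonglongrightarrow> x"
  have "filterlim (\<lambda>k. (ts k, xs k)) (at_right_times_nhds V x) sequentially"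
    using ts xs by (intro filterlim_at_right_times_nhds filterlim_sequentially_at_right) auto
  from Liminf_le_Liminf_filterlim[OF this, where f = "\<lambda>(t, u). second_diff_quot g z v t u"]
  show "second_subderiv V g z v x \<le> liminf (\<lambda>k. second_diff_quot g z v (ts k) (xs k))"
    unfolding second_subderiv_def by simp
next
  fix ts :: "nat \<Rightarrow> real" and x
  assume ts: "(\<forall>k. 0 < ts k) \<and> ts \<longlonglongrightarrow> 0" and x: "x \<in> V"
  show "\<exists>xs. (\<forall>k. xs k \<in> V) \<and> xs \<longlonglongrightarrow> x \<and>
      limsup (\<lambda>k. second_diff_quot g z v (ts k) (xs k)) \<le> second_subderiv V g z v x"
  proof (cases "d x = \<infinity>")
    case True
    then show ?thesis
      using x second_subderiv_eq_of_bounds[OF x] by (intro exI[of _ "\<lambda>k. x"]) simp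
  next
    case False
    then obtain K where K: "K \<in> V" "\<forall>t>0. second_diff_quot g z v t (x + t *\<^sub>R K) \<le> d x"
      using recovery[OF x] by blast
    have "(\<lambda>k. x + ts k *\<^sub>R K) \<longlonglongrightarrow> x + 0 *\<^sub>R K"
      using ts by (intro tendsto_intros) auto
    moreover have "limsup (\<lambda>k. second_diff_quot g z v (ts k) (x + ts k *\<^sub>R K)) \<le> d x"
      using K(2) ts by (intro Limsup_bounded always_eventually) auto
    ultimately show ?thesis
      using x K(1) V second_subderiv_eq_of_bounds[OF x]
      by (intro exI[of _ "\<lambda>k. x + ts k *\<^sub>R K"]) (simp add: subspace_add subspace_scale)
  qed
qed

end

section \<open>The psd-cone indicator at a strictly complementary pair\<close>

definition strictly_complementary :: "('n \<Rightarrow> real) \<Rightarrow> ('n \<Rightarrow> real) \<Rightarrow> bool" where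
  "strictly_complementary z m \<longleftrightarrow> (\<forall>i. (0 < z i \<and> m i = 0) \<or> (z i = 0 \<and> m i < 0))"

definition inv_pos :: "('n \<Rightarrow> real) \<Rightarrow> 'n \<Rightarrow> real" where
  "inv_pos z i = (if 0 < z i then 1 / z i else 0)"

definition weighted_col :: "('n \<Rightarrow> real) \<Rightarrow> real^'n^'n \<Rightarrow> 'n \<Rightarrow> real^'n" where
  "weighted_col z U j = (\<chi> a. inv_pos z a * U $ a $ j)"

definition weighted_col_sq :: "('n \<Rightarrow> real) \<Rightarrow> real^'n^'n \<Rightarrow> 'n \<Rightarrow> real" where
  "weighted_col_sq z U j = (\<Sum>i\<in>UNIV. inv_pos z i * (U $ i $ j)\<^sup>2)"

lemma inv_pos_nonneg: "0 \<le> inv_pos z i"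
  unfolding inv_pos_def by simp

lemma mult_inv_pos_sq: "z i * (inv_pos z i)\<^sup>2 = inv_pos z i"
  unfolding inv_pos_def by (simp add: power2_eq_square)

context
  fixes z :: "'n::finite \<Rightarrow> real" and t :: real and U :: "real^'n^'n"
  assumes t: "0 < t" and psd: "\<And>y. 0 \<le> y \<bullet> ((diag_mat z + t *\<^sub>R U) *v y)"
begin

lemma quadratic_form_diag_plus:
  "y \<bullet> ((diag_mat z + t *\<^sub>R U) *v y) = y \<bullet> (diag_mat z *v y) + t * (y \<bullet> (U *v y))"
  by (simp add: matrix_vector_mult_add_rdistrib inner_add_right scaleR_matrix_vector_assoc[symmetric])

lemma diag_nonneg_of_psd_perturbation:
  assumes "z j = 0"
  shows "0 \<le> U $ j $ j"
  using psd[of "axis j 1"] t assms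
  by (simp add: quadratic_form_diag_plus inner_axis_matrix_axis zero_le_mult_iff)

lemma offdiag_bound_of_psd_perturbation:
  assumes U: "U \<in> sym_mats" and "z j = 0" "z k = 0"
  shows "2 * \<bar>U $ j $ k\<bar> \<le> U $ j $ j + U $ k $ k"
proof -
  have "0 \<le> U $ j $ j + U $ k $ k + 2 * s * U $ j $ k" if "s\<^sup>2 = 1" for s
  proof -
    let ?y = "axis j 1 + s *\<^sub>R axis k 1"
    have "?y \<bullet> (diag_mat z *v ?y) = 0"
      using assms(2,3) unfolding quadratic_form_diag_mat
      by (intro sum.neutral) (auto simp: axis_def)
    moreover have "?y \<bullet> (U *v ?y) = U $ j $ j + U $ k $ k + 2 * s * U $ j $ k"
      using that U unfolding sym_mats_iff
      by (simp add: matrix_vector_right_distrib matrix_vector_mult_scaleR inner_add_left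
          inner_add_right inner_axis_matrix_axis algebra_simps power2_eq_square)
    ultimately show ?thesis
      using psd[of ?y] t by (simp add: quadratic_form_diag_plus zero_le_mult_iff)
  qed
  from this[of 1] this[of "-1"] show ?thesis by (simp add: abs_if)
qed

lemma schur_bound_of_psd_perturbation:
  assumes U: "U \<in> sym_mats" and zj: "z j = 0"
  shows "t * weighted_col_sq z U j - t\<^sup>2 * (weighted_col z U j \<bullet> (U *v weighted_col z U j)) \<le> U $ j $ j"
proof -
  define c where "c = weighted_col z U j"
  define S where "S = weighted_col_sq z U j"
  \<comment> \<open>Schur complement: y corrects e_j by the optimal t diag(z)^+ U e_j in the block z > 0.\<close>
  define y where "y = axis j (1::real) - t *\<^sub>R c"
  have Usym: "U $ a $ b = U $ b $ a" for a b using U by (simp add: sym_mats_iff)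
  have "inv_pos z j = 0" using zj by (simp add: inv_pos_def)
  then have "z a * (y $ a)\<^sup>2 = t\<^sup>2 * (inv_pos z a * (U $ a $ j)\<^sup>2)" for a
    using zj mult_inv_pos_sq[of z a]
    by (cases "a = j") (auto simp: y_def c_def weighted_col_def axis_def power2_eq_square algebra_simps)
  then have diag_part: "y \<bullet> (diag_mat z *v y) = t\<^sup>2 * S"
    unfolding quadratic_form_diag_mat S_def weighted_col_sq_def by (simp add: sum_distrib_left)
  have "axis j 1 \<bullet> (U *v c) = (\<Sum>b\<in>UNIV. U $ j $ b * (inv_pos z b * U $ b $ j))"
    by (simp add: inner_axis' matrix_vector_mult_def c_def weighted_col_def)
  also have "\<dots> = S"
    unfolding S_def weighted_col_sq_def
    by (intro sum.cong refl) (simp add: Usym[of j] power2_eq_square mult_ac)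
  moreover have "c \<bullet> (U *v axis j 1) = S"
    unfolding S_def weighted_col_sq_def
    by (simp add: inner_vec_def matrix_vector_mult_basis column_def c_def weighted_col_def
        power2_eq_square mult_ac)
  ultimately have "axis j 1 \<bullet> (U *v c) = S" "c \<bullet> (U *v axis j 1) = S" by simp_all
  then have U_part: "y \<bullet> (U *v y) = U $ j $ j - 2 * t * S + t\<^sup>2 * (c \<bullet> (U *v c))"
    unfolding y_def
    by (simp add: matrix_vector_mult_diff_distrib matrix_vector_mult_scaleR inner_diff_left
        inner_diff_right inner_axis_matrix_axis power2_eq_square algebra_simps)
  have "0 \<le> t * (U $ j $ j - t * S + t\<^sup>2 * (c \<bullet> (U *v c)))"
    using psd[of y] unfolding quadratic_form_diag_plus diag_part U_part
    by (simp add: power2_eq_square algebra_simps)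
  then have "0 \<le> U $ j $ j - t * S + t\<^sup>2 * (c \<bullet> (U *v c))"
    using t by (simp add: zero_le_mult_iff)
  then show ?thesis by (simp add: c_def S_def power2_eq_square algebra_simps)
qed

end

context
  fixes z m :: "'n \<Rightarrow> real"
  assumes sc: "strictly_complementary z m"
begin

lemma strictly_complementary_nonneg: "0 \<le> z i"
  using sc unfolding strictly_complementary_def by (metis order.strict_implies_order order_refl)

lemma strictly_complementary_nonpos: "m i \<le> 0"
  using sc unfolding strictly_complementary_def by (metis order.strict_implies_order order_refl)

lemma strictly_complementary_neg: "m i < 0 \<Longrightarrow> z i = 0"
  using sc unfolding strictly_complementary_def by force

lemma strictly_complementary_zero: "z i = 0 \<Longrightarrow> m i < 0"
  using sc unfolding strictly_complementary_def by force

lemma strictly_complementary_not_neg: "\<not> m i < 0 \<Longrightarrow> m i = 0"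
  using sc unfolding strictly_complementary_def by force

end

context
  fixes z m :: "'n::finite \<Rightarrow> real"
  assumes sc: "strictly_complementary z m"
begin

lemma schur_sum_bound:
  assumes t: "0 < t" and psd: "\<And>y. 0 \<le> y \<bullet> ((diag_mat z + t *\<^sub>R U) *v y)" and U: "U \<in> sym_mats"
  shows "(\<Sum>j\<in>UNIV. - 2 * m j * (weighted_col_sq z U j - t * (weighted_col z U j \<bullet> (U *v weighted_col z U j))))
    \<le> (\<Sum>j\<in>UNIV. - 2 * m j * (U $ j $ j / t))"
proof (rule sum_mono)
  fix j
  show "- 2 * m j * (weighted_col_sq z U j - t * (weighted_col z U j \<bullet> (U *v weighted_col z U j)))
      \<le> - 2 * m j * (U $ j $ j / t)"
  proof (cases "m j < 0")
    case True
    with schur_bound_of_psd_perturbation[OF t psd U strictly_complementary_neg[OF sc True]]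
    have "weighted_col_sq z U j - t * (weighted_col z U j \<bullet> (U *v weighted_col z U j)) \<le> U $ j $ j / t"
      using t by (simp add: field_simps power2_eq_square)
    then show ?thesis using True by (intro mult_left_mono) auto
  qed (simp add: strictly_complementary_not_neg[OF sc])
qed

lemma offdiag_le_weighted_trace:
  assumes t: "0 < t" and psd: "\<And>y. 0 \<le> y \<bullet> ((diag_mat z + t *\<^sub>R U) *v y)" and U: "U \<in> sym_mats"
    and j: "m j < 0" and k: "m k < 0"
  shows "min (- m j) (- m k) * \<bar>U $ j $ k\<bar> \<le> (\<Sum>l\<in>UNIV. - m l * U $ l $ l)"
proof -
  define f where "f l = - m l * U $ l $ l" for l
  have diag: "0 \<le> U $ l $ l" if "m l < 0" for l
    using diag_nonneg_of_psd_perturbation[OF t psd] strictly_complementary_neg[OF sc that] .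
  have f_nonneg: "0 \<le> f l" for l
    using diag[of l] strictly_complementary_not_neg[OF sc, of l] by (cases "m l < 0") (auto simp: f_def mult_le_0_iff)
  have "min (- m j) (- m k) * \<bar>U $ j $ k\<bar> \<le> min (- m j) (- m k) * ((U $ j $ j + U $ k $ k) / 2)"
    using offdiag_bound_of_psd_perturbation[OF t psd U, of j k] strictly_complementary_neg[OF sc] j k
    by (intro mult_left_mono) auto
  also have "\<dots> \<le> (f j + f k) / 2"
  proof -
    have "min (- m j) (- m k) * U $ j $ j \<le> (- m j) * U $ j $ j"
      using diag[OF j] by (intro mult_right_mono) auto
    moreover have "min (- m j) (- m k) * U $ k $ k \<le> (- m k) * U $ k $ k"
      using diag[OF k] by (intro mult_right_mono) auto
    ultimately show ?thesis by (simp add: f_def field_simps)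
  qed
  also have "\<dots> \<le> sum f UNIV"
    using member_le_sum[of j UNIV f] member_le_sum[of k UNIV f] f_nonneg by simp
  finally show ?thesis by (simp add: f_def)
qed

end

definition sc_weight :: "('n \<Rightarrow> real) \<Rightarrow> ('n \<Rightarrow> real) \<Rightarrow> 'n \<Rightarrow> 'n \<Rightarrow> real" where
  "sc_weight z m i j = - 2 * m j * inv_pos z i"

definition both_neg :: "('n \<Rightarrow> real) \<Rightarrow> 'n \<Rightarrow> 'n \<Rightarrow> bool" where
  "both_neg m i j \<longleftrightarrow> m i < 0 \<and> m j < 0"

lemma sc_weight_nonneg: "strictly_complementary z m \<Longrightarrow> 0 \<le> sc_weight z m i j"
  unfolding sc_weight_def using strictly_complementary_nonpos[of z m j] inv_pos_nonneg[of z i]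
  by (simp add: mult_nonpos_nonneg mult_le_0_iff)

lemma weighted_sq_sc_weight:
  "weighted_sq P (sc_weight z m) W = (\<Sum>j\<in>UNIV. - 2 * m j * weighted_col_sq z (in_basis P W) j)"
  unfolding weighted_sq_def weighted_col_sq_def sc_weight_def
  by (subst sum.swap) (simp add: sum_distrib_left mult_ac)

lemma second_diff_quot_psd_indicator:
  assumes Z: "Z \<in> psd_cone" and t: "0 < t"
  shows "second_diff_quot (indicator_fun psd_cone) Z Y t U =
    (if Z + t *\<^sub>R U \<in> psd_cone then ereal (- 2 * (Y \<bullet> U) / t) else \<infinity>)"
proof -
  have "- (t * (Y \<bullet> U)) / (t\<^sup>2 / 2) = - 2 * (Y \<bullet> U) / t"
    using t by (simp add: field_simps power2_eq_square)
  then show ?thesis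
    using Z t unfolding second_diff_quot_def indicator_fun_def by (simp add: zero_ereal_def)
qed

lemma eventually_less_second_diff_quot:
  assumes Z: "Z \<in> psd_cone" and y: "y < \<infinity>"
    and ev: "eventually (\<lambda>(t, U). 0 < t \<and> (Z + t *\<^sub>R U \<in> psd_cone \<longrightarrow> y < ereal (- 2 * (Y \<bullet> U) / t))) F"
  shows "eventually (\<lambda>(t, U). y < second_diff_quot (indicator_fun psd_cone) Z Y t U) F"
  using ev by (rule eventually_mono) (use y in \<open>auto simp: second_diff_quot_psd_indicator[OF Z]\<close>)

lemma psd_perturbation_in_basis:
  assumes P: "orthogonal_matrix P" and "P ** diag_mat z ** transpose P + t *\<^sub>R U \<in> psd_cone"
  shows "0 \<le> y \<bullet> ((diag_mat z + t *\<^sub>R in_basis P U) *v y)"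
  using psd_cone_in_basis[OF assms(2), of y P]
  by (simp add: in_basis_add in_basis_scaleR in_basis_conj[OF P])

lemma congruence_diag_entry:
  fixes C :: "real^'n^'n"
  shows "(transpose C ** diag_mat z ** C) $ a $ b = (\<Sum>c\<in>UNIV. C $ c $ a * z c * C $ c $ b)"
proof -
  have "(transpose C ** diag_mat z) $ a $ c = C $ c $ a * z c" for c
  proof -
    have "(\<Sum>k\<in>UNIV. C $ k $ a * (if k = c then z k else 0)) = C $ c $ a * z c"
      by (subst sum.cong[OF refl, where h = "\<lambda>k. if k = c then C $ c $ a * z c else 0"]) auto
    then show ?thesis by (simp add: matrix_matrix_mult_def transpose_def)
  qed
  then show ?thesis by (simp add: matrix_matrix_mult_def mult_ac)
qed

lemma congruence_diag_identity_perturbation: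
  fixes A :: "real^'n^'n"
  shows "(transpose (mat 1 + t *\<^sub>R A) ** diag_mat z ** (mat 1 + t *\<^sub>R A)) $ a $ b =
    (if a = b then z a else 0) + t * (z a * A $ a $ b + A $ b $ a * z b) +
    t\<^sup>2 * (transpose A ** diag_mat z ** A) $ a $ b"
proof -
  have "((if c = a then 1 else 0) + t * A $ c $ a) * z c * ((if c = b then 1 else 0) + t * A $ c $ b)
     = (if c = a then (if a = b then z a else 0) else 0) + (if c = a then t * (z a * A $ a $ b) else 0)
       + (if c = b then t * (A $ b $ a * z b) else 0) + t\<^sup>2 * (A $ c $ a * z c * A $ c $ b)" for c
    by (simp add: algebra_simps power2_eq_square)
  then show ?thesis
    unfolding congruence_diag_entry
    by (simp add: mat_def sum.distrib sum_distrib_left algebra_simps)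
qed

definition lyapunov_solution :: "('n \<Rightarrow> real) \<Rightarrow> real^'n^'n \<Rightarrow> real^'n^'n" where
  "lyapunov_solution z W =
    (\<chi> a b. if 0 < z a then (if 0 < z b then W $ a $ b / (2 * z a) else W $ a $ b / z a) else 0)"

lemma lyapunov_solution_eq:
  assumes W: "W \<in> sym_mats" and z: "\<And>a. 0 \<le> z a" and zero: "z a = 0 \<Longrightarrow> z b = 0 \<Longrightarrow> W $ a $ b = 0"
  shows "z a * lyapunov_solution z W $ a $ b + lyapunov_solution z W $ b $ a * z b = W $ a $ b"
proof -
  have "W $ b $ a = W $ a $ b" using W by (simp add: sym_mats_iff)
  then show ?thesis
    using z[of a] z[of b] zero
    by (cases "0 < z a"; cases "0 < z b") (auto simp: lyapunov_solution_def field_simps)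
qed

lemma lyapunov_congruence:
  assumes W: "W \<in> sym_mats" and z: "\<And>a. 0 \<le> z a"
    and zero: "\<And>a b. z a = 0 \<Longrightarrow> z b = 0 \<Longrightarrow> W $ a $ b = 0"
  defines "A \<equiv> lyapunov_solution z W"
  shows "diag_mat z + t *\<^sub>R W + t\<^sup>2 *\<^sub>R (transpose A ** diag_mat z ** A) =
    transpose (mat 1 + t *\<^sub>R A) ** diag_mat z ** (mat 1 + t *\<^sub>R A)"
proof -
  have "z a * A $ a $ b + A $ b $ a * z b = W $ a $ b" for a b
    using lyapunov_solution_eq[of W z a b] W z zero by (simp add: A_def)
  then show ?thesis unfolding vec_eq_iff congruence_diag_identity_perturbation by simp
qed

lemma lyapunov_congruence_diag:
  assumes "z j = 0"
  shows "(transpose (lyapunov_solution z W) ** diag_mat z ** lyapunov_solution z W) $ j $ j =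
    weighted_col_sq z W j"
  unfolding congruence_diag_entry weighted_col_sq_def using assms
  by (intro sum.cong refl) (simp add: lyapunov_solution_def inv_pos_def power2_eq_square)

definition recovery_dir :: "real^'n^'n \<Rightarrow> ('n \<Rightarrow> real) \<Rightarrow> real^'n^'n \<Rightarrow> real^'n^'n" where
  "recovery_dir P z W = P ** (transpose (lyapunov_solution z (in_basis P W)) ** diag_mat z **
    lyapunov_solution z (in_basis P W)) ** transpose P"

context
  fixes P :: "real^'n^'n" and z m :: "'n \<Rightarrow> real"
  assumes P: "orthogonal_matrix P" and sc: "strictly_complementary z m"
begin

lemma eventually_less_second_diff_quot_sc:
  assumes y: "y < ereal (weighted_sq P (sc_weight z m) W)"
  shows "eventually (\<lambda>(t, U). y < second_diff_quot (indicator_fun psd_cone)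
      (P ** diag_mat z ** transpose P) (P ** diag_mat m ** transpose P) t U) (at_right_times_nhds sym_mats W)"
proof (rule eventually_less_second_diff_quot)
  let ?F = "at_right_times_nhds sym_mats W"
  let ?Y = "P ** diag_mat m ** transpose P"
  define phi where "phi p = (\<Sum>j\<in>UNIV. - 2 * m j * (weighted_col_sq z (in_basis P (snd p)) j -
      fst p * (weighted_col z (in_basis P (snd p)) j \<bullet> (in_basis P (snd p) *v weighted_col z (in_basis P (snd p)) j))))"
    for p :: "real \<times> (real^'n^'n)"
  obtain r where r: "y < ereal r" "r < weighted_sq P (sc_weight z m) W" using ereal_dense2[OF y] by auto
  have "(phi \<longlongrightarrow> (\<Sum>j\<in>UNIV. - 2 * m j * (weighted_col_sq z (in_basis P W) j - 0 *
      (weighted_col z (in_basis P W) j \<bullet> (in_basis P W *v weighted_col z (in_basis P W) j))))) ?F"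
    unfolding phi_def weighted_col_sq_def weighted_col_def quadratic_form_expand
    by (intro tendsto_intros tendsto_in_basis_entry at_right_times_nhds_props)
  then have "(phi \<longlongrightarrow> weighted_sq P (sc_weight z m) W) ?F" by (simp add: weighted_sq_sc_weight)
  then have "eventually (\<lambda>p. r < phi p) ?F" using r(2) by (rule order_tendstoD)
  with at_right_times_nhds_props(1)
  show "eventually (\<lambda>(t, U). 0 < t \<and> (P ** diag_mat z ** transpose P + t *\<^sub>R U \<in> psd_cone \<longrightarrow>
      y < ereal (- 2 * (?Y \<bullet> U) / t))) ?F"
  proof eventually_elim
    case (elim p)
    obtain t U where p: "p = (t, U)" by (cases p)
    have "phi p \<le> - 2 * (?Y \<bullet> U) / t"
      if "P ** diag_mat z ** transpose P + t *\<^sub>R U \<in> psd_cone"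
    proof -
      have "in_basis P U \<in> sym_mats" using elim p in_basis_sym by (auto simp: sym_mats_iff)
      from schur_sum_bound[OF sc _ psd_perturbation_in_basis[OF P that] this]
      show ?thesis using elim p
        by (simp add: phi_def inner_conj_diag_mat[OF P] sum_distrib_left sum_divide_distrib mult_ac)
    qed
    then show ?case using elim p r(1) by (auto intro: less_le_trans)
  qed
qed (use conj_diag_psd strictly_complementary_nonneg[OF sc] y in auto)

lemma offdiag_le_neg_inner:
  assumes t: "0 < t" and psd: "P ** diag_mat z ** transpose P + t *\<^sub>R U \<in> psd_cone"
    and U: "U \<in> sym_mats" and j: "m j < 0" and k: "m k < 0"
  shows "min (- m j) (- m k) * \<bar>in_basis P U $ j $ k\<bar> \<le> - ((P ** diag_mat m ** transpose P) \<bullet> U)"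
proof -
  have "in_basis P U \<in> sym_mats" using U in_basis_sym by (auto simp: sym_mats_iff)
  from offdiag_le_weighted_trace[OF sc t psd_perturbation_in_basis[OF P psd] this j k]
  show ?thesis by (simp add: inner_conj_diag_mat[OF P] sum_negf)
qed

lemma eventually_less_second_diff_quot_off:
  assumes W: "W \<in> sym_mats" "W \<notin> vanishing_on P (both_neg m)" and y: "y < \<infinity>"
  shows "eventually (\<lambda>(t, U). y < second_diff_quot (indicator_fun psd_cone)
      (P ** diag_mat z ** transpose P) (P ** diag_mat m ** transpose P) t U) (at_right_times_nhds sym_mats W)"
proof (rule eventually_less_second_diff_quot[OF _ y])
  let ?F = "at_right_times_nhds sym_mats W"
  let ?Y = "P ** diag_mat m ** transpose P"
  obtain j k where j: "m j < 0" and k: "m k < 0" and Wjk: "in_basis P W $ j $ k \<noteq> 0"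
    using W unfolding vanishing_on_def both_neg_def by blast
  obtain B where B: "y < ereal B" using ereal_dense2[OF y] by auto
  define mu where "mu = min (- m j) (- m k)"
  define om where "om = \<bar>in_basis P W $ j $ k\<bar>"
  have mu: "0 < mu" and om: "0 < om" using j k Wjk by (auto simp: mu_def om_def)
  have "((\<lambda>p. \<bar>in_basis P (snd p) $ j $ k\<bar>) \<longlongrightarrow> om) ?F"
    unfolding om_def by (intro tendsto_intros tendsto_in_basis_entry at_right_times_nhds_props)
  then have "eventually (\<lambda>p. om / 2 < \<bar>in_basis P (snd p) $ j $ k\<bar>) ?F"
    using om by (intro order_tendstoD(1)) auto
  moreover have "eventually (\<lambda>p. fst p < mu * om / (\<bar>B\<bar> + 1)) ?F"
    using mu om by (intro order_tendstoD(2)[OF at_right_times_nhds_props(2)]) simp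
  ultimately show "eventually (\<lambda>(t, U). 0 < t \<and> (P ** diag_mat z ** transpose P + t *\<^sub>R U \<in> psd_cone \<longrightarrow>
      y < ereal (- 2 * (?Y \<bullet> U) / t))) ?F"
    using at_right_times_nhds_props(1)
  proof eventually_elim
    case (elim p)
    obtain t U where p: "p = (t, U)" by (cases p)
    have t: "0 < t" and U: "U \<in> sym_mats" using elim p by auto
    have "B < - 2 * (?Y \<bullet> U) / t" if psd: "P ** diag_mat z ** transpose P + t *\<^sub>R U \<in> psd_cone"
    proof -
      have "\<bar>B\<bar> + 1 < mu * om / t" using elim p t mu om by (simp add: field_simps)
      then have "B < mu * om / t" by linarith
      also have "\<dots> \<le> 2 * (mu * \<bar>in_basis P U $ j $ k\<bar>) / t"
        using elim p t mu by (intro divide_right_mono) auto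
      also have "\<dots> \<le> - 2 * (?Y \<bullet> U) / t"
        using offdiag_le_neg_inner[OF t psd U j k] t unfolding mu_def by (intro divide_right_mono) auto
      finally show ?thesis .
    qed
    then show ?case using t B p by (auto intro: less_trans)
  qed
qed (use conj_diag_psd strictly_complementary_nonneg[OF sc] in auto)

lemma psd_recovery_path:
  assumes W: "W \<in> vanishing_on P (both_neg m)"
  shows "P ** diag_mat z ** transpose P + t *\<^sub>R (W + t *\<^sub>R recovery_dir P z W) \<in> psd_cone"
proof -
  define Wt where "Wt = in_basis P W"
  define A where "A = lyapunov_solution z Wt"
  have z: "\<And>i. 0 \<le> z i" using strictly_complementary_nonneg[OF sc] .
  have "Wt \<in> sym_mats" using W in_basis_sym by (auto simp: vanishing_on_def sym_mats_iff Wt_def)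
  moreover have "Wt $ a $ b = 0" if "z a = 0" "z b = 0" for a b
    using W strictly_complementary_zero[OF sc that(1)] strictly_complementary_zero[OF sc that(2)]
    unfolding vanishing_on_def both_neg_def Wt_def by blast
  ultimately have congruence: "diag_mat z + t *\<^sub>R Wt + t\<^sup>2 *\<^sub>R (transpose A ** diag_mat z ** A) =
      transpose (mat 1 + t *\<^sub>R A) ** diag_mat z ** (mat 1 + t *\<^sub>R A)"
    unfolding A_def by (rule lyapunov_congruence[OF _ z])
  have "P ** diag_mat z ** transpose P + t *\<^sub>R (W + t *\<^sub>R recovery_dir P z W)
      = P ** (diag_mat z + t *\<^sub>R Wt + t\<^sup>2 *\<^sub>R (transpose A ** diag_mat z ** A)) ** transpose P"
    by (rule in_basis_inj[OF P]) (simp add: in_basis_add in_basis_scaleR in_basis_conj[OF P]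
        recovery_dir_def Wt_def A_def power2_eq_square scaleR_add_right)
  also have "\<dots> = transpose ((mat 1 + t *\<^sub>R A) ** transpose P) ** diag_mat z ** ((mat 1 + t *\<^sub>R A) ** transpose P)"
    unfolding congruence by (simp add: matrix_transpose_mul matrix_mul_assoc)
  finally show ?thesis using congruent_diag_psd[OF z] by simp
qed

lemma inner_recovery_path:
  assumes W: "W \<in> vanishing_on P (both_neg m)"
  shows "- 2 * ((P ** diag_mat m ** transpose P) \<bullet> (W + t *\<^sub>R recovery_dir P z W)) =
    t * weighted_sq P (sc_weight z m) W"
proof -
  define Wt where "Wt = in_basis P W"
  have W_zero: "Wt $ j $ j = 0" if "m j < 0" for j
    using W that unfolding vanishing_on_def both_neg_def Wt_def by blast
  have K_diag: "in_basis P (recovery_dir P z W) $ j $ j = weighted_col_sq z Wt j" if "m j < 0" for j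
    unfolding recovery_dir_def in_basis_conj[OF P] Wt_def
    by (rule lyapunov_congruence_diag[of z, OF strictly_complementary_neg[OF sc that]])
  have "(P ** diag_mat m ** transpose P) \<bullet> (W + t *\<^sub>R recovery_dir P z W) =
      (\<Sum>j\<in>UNIV. m j * (Wt $ j $ j + t * in_basis P (recovery_dir P z W) $ j $ j))"
    by (simp add: inner_conj_diag_mat[OF P] in_basis_add in_basis_scaleR Wt_def)
  also have "\<dots> = (\<Sum>j\<in>UNIV. t * (m j * weighted_col_sq z Wt j))"
  proof (rule sum.cong)
    fix j
    show "m j * (Wt $ j $ j + t * in_basis P (recovery_dir P z W) $ j $ j) = t * (m j * weighted_col_sq z Wt j)"
      using W_zero[of j] K_diag[of j] strictly_complementary_not_neg[OF sc, of j]
      by (cases "m j < 0") simp_all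
  qed simp
  finally show ?thesis
    unfolding weighted_sq_sc_weight Wt_def[symmetric] by (simp add: sum_distrib_left mult_ac)
qed

lemma second_diff_quot_recovery:
  assumes W: "W \<in> vanishing_on P (both_neg m)"
  shows "\<exists>K\<in>sym_mats. \<forall>t>0. second_diff_quot (indicator_fun psd_cone) (P ** diag_mat z ** transpose P)
    (P ** diag_mat m ** transpose P) t (W + t *\<^sub>R K) \<le> ereal (weighted_sq P (sc_weight z m) W)"
proof (intro bexI allI impI)
  fix t :: real assume t: "0 < t"
  have Z: "P ** diag_mat z ** transpose P \<in> psd_cone"
    using conj_diag_psd strictly_complementary_nonneg[OF sc] by blast
  show "second_diff_quot (indicator_fun psd_cone) (P ** diag_mat z ** transpose P)
      (P ** diag_mat m ** transpose P) t (W + t *\<^sub>R recovery_dir P z W) \<le> ereal (weighted_sq P (sc_weight z m) W)"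
    using psd_recovery_path[OF W] inner_recovery_path[OF W, of t] t
    by (simp add: second_diff_quot_psd_indicator[OF Z t])
qed (simp add: sym_mats_def recovery_dir_def transpose_conj matrix_transpose_mul matrix_mul_assoc)

lemma second_subderiv_strictly_complementary:
  "W \<in> sym_mats \<Longrightarrow> second_subderiv sym_mats (indicator_fun psd_cone) (P ** diag_mat z ** transpose P)
    (P ** diag_mat m ** transpose P) W = weighted_sq_on P (both_neg m) (sc_weight z m) W"
  and gen_twice_diff_strictly_complementary:
  "gen_twice_diff sym_mats (indicator_fun psd_cone) (P ** diag_mat z ** transpose P) (P ** diag_mat m ** transpose P)"
proof -
  have Z: "P ** diag_mat z ** transpose P \<in> psd_cone"
    using conj_diag_psd strictly_complementary_nonneg[OF sc] by blast
  note bounds = subspace_sym_mats subsetD[OF psd_cone_sym_mats Z] conj_diag_sym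
  have fin: "\<bar>indicator_fun psd_cone (P ** diag_mat z ** transpose P)\<bar> \<noteq> \<infinity>"
    using Z by (simp add: indicator_fun_def)
  have lower: "eventually (\<lambda>(t, U). y < second_diff_quot (indicator_fun psd_cone)
      (P ** diag_mat z ** transpose P) (P ** diag_mat m ** transpose P) t U) (at_right_times_nhds sym_mats W)"
    if "W \<in> sym_mats" "y < weighted_sq_on P (both_neg m) (sc_weight z m) W" for W y
    using that eventually_less_second_diff_quot_sc eventually_less_second_diff_quot_off
    by (auto simp: weighted_sq_on_def split: if_splits)
  have recovery: "\<exists>K\<in>sym_mats. \<forall>t>0. second_diff_quot (indicator_fun psd_cone) (P ** diag_mat z ** transpose P)
      (P ** diag_mat m ** transpose P) t (W + t *\<^sub>R K) \<le> weighted_sq_on P (both_neg m) (sc_weight z m) W"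
    if "W \<in> sym_mats" "weighted_sq_on P (both_neg m) (sc_weight z m) W \<noteq> \<infinity>" for W
    using that second_diff_quot_recovery by (simp add: weighted_sq_on_def split: if_splits)
  show eq: "W \<in> sym_mats \<Longrightarrow> second_subderiv sym_mats (indicator_fun psd_cone) (P ** diag_mat z ** transpose P)
      (P ** diag_mat m ** transpose P) W = weighted_sq_on P (both_neg m) (sc_weight z m) W" for W
    by (rule second_subderiv_eq_of_bounds[OF bounds fin lower recovery])
  have "gen_quad_form sym_mats (second_subderiv sym_mats (indicator_fun psd_cone)
      (P ** diag_mat z ** transpose P) (P ** diag_mat m ** transpose P))"
    using eq sc_weight_nonneg[OF sc] by (intro gen_quad_form_weighted_sq_on) auto
  then show "gen_twice_diff sym_mats (indicator_fun psd_cone) (P ** diag_mat z ** transpose P)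
      (P ** diag_mat m ** transpose P)"
    unfolding gen_twice_diff_def using twice_epi_diff_of_bounds[OF bounds fin lower recovery] by blast
qed

end

section \<open>Epi-convergence to an element of the quadratic bundle\<close>

lemma epi_conv_seq_cong:
  assumes "\<And>k w. w \<in> V \<Longrightarrow> F k w = F' k w" and "epi_conv_seq V F' f"
  shows "epi_conv_seq V F f"
proof -
  have "(\<lambda>k. F k (xs k)) = (\<lambda>k. F' k (xs k))" if "\<forall>k. xs k \<in> V" for xs
    using assms(1) that by auto
  then show ?thesis using assms(2) unfolding epi_conv_seq_def by metis
qed

definition perturbed_eigs :: "('n \<Rightarrow> real) \<Rightarrow> nat \<Rightarrow> 'n \<Rightarrow> real" where
  "perturbed_eigs lam k i = max (lam i) 0 + (if lam i = 0 then inverse (real (Suc k)) else 0)"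

definition crit_pattern :: "('n \<Rightarrow> real) \<Rightarrow> 'n \<Rightarrow> 'n \<Rightarrow> bool" where
  "crit_pattern lam i j \<longleftrightarrow> lam j < 0 \<and> lam i \<le> 0"

definition sigma_weight :: "('n \<Rightarrow> real) \<Rightarrow> 'n \<Rightarrow> 'n \<Rightarrow> real" where
  "sigma_weight lam i j = (if 0 < lam i \<and> lam j < 0 then - lam j / lam i else 0)"

definition penalty_weight :: "('n \<Rightarrow> real) \<Rightarrow> nat \<Rightarrow> 'n \<Rightarrow> 'n \<Rightarrow> real" where
  "penalty_weight lam k i j = (if lam i = 0 then - min (lam j) 0 * real (Suc k) else 0)"

lemma strictly_complementary_perturbed_eigs:
  "strictly_complementary (perturbed_eigs lam k) (\<lambda>i. min (lam i) 0)"
  unfolding strictly_complementary_def perturbed_eigs_def by (auto simp: max_def min_def)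

lemma sigma_weight_nonneg: "0 \<le> sigma_weight lam i j"
  unfolding sigma_weight_def by (auto simp: divide_nonpos_pos)

lemma penalty_weight_nonneg: "0 \<le> penalty_weight lam k i j"
  unfolding penalty_weight_def by (auto simp: min_def mult_le_0_iff)

lemma aff_crit_cone_eq: "aff_crit_cone P lam = vanishing_on P (crit_pattern lam)"
  unfolding aff_crit_cone_def vanishing_on_def crit_pattern_def in_basis_def by auto

lemma vanishing_on_crit_pattern_subset:
  "vanishing_on P (crit_pattern lam) \<subseteq> vanishing_on P (both_neg (\<lambda>i. min (lam i) 0))"
  by (rule vanishing_on_mono) (auto simp: crit_pattern_def both_neg_def)

lemma penalty_vanishing_on_crit_pattern:
  "W \<in> vanishing_on P (crit_pattern lam) \<Longrightarrow> weighted_sq P (penalty_weight lam k) W = 0"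
  unfolding weighted_sq_def vanishing_on_def crit_pattern_def penalty_weight_def
  by (intro sum.neutral ballI) (auto simp: min_def le_less)

lemma half_sc_weighted_sq_on_perturbed_eigs:
  "ereal (1/2) * weighted_sq_on P (both_neg (\<lambda>i. min (lam i) 0))
      (sc_weight (perturbed_eigs lam k) (\<lambda>i. min (lam i) 0)) W =
   (if W \<in> vanishing_on P (both_neg (\<lambda>i. min (lam i) 0))
    then ereal (weighted_sq P (sigma_weight lam) W + weighted_sq P (penalty_weight lam k) W) else \<infinity>)"
proof -
  have "sc_weight (perturbed_eigs lam k) (\<lambda>i. min (lam i) 0) i j =
      2 * (sigma_weight lam i j + penalty_weight lam k i j)" for i j
    unfolding sc_weight_def sigma_weight_def penalty_weight_def inv_pos_def perturbed_eigs_def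
    by (auto simp: min_def max_def field_simps)
  then have "weighted_sq P (sc_weight (perturbed_eigs lam k) (\<lambda>i. min (lam i) 0)) W =
      2 * (weighted_sq P (sigma_weight lam) W + weighted_sq P (penalty_weight lam k) W)"
    unfolding weighted_sq_def by (simp add: sum_distrib_left sum.distrib[symmetric] algebra_simps)
  then show ?thesis by (simp add: weighted_sq_on_def)
qed

lemma eventually_penalty_gt:
  assumes xs: "xs \<longlonglongrightarrow> W" and ij: "lam i = 0" "lam j < 0" and Wij: "in_basis P W $ i $ j \<noteq> 0"
  shows "eventually (\<lambda>k. B < weighted_sq P (penalty_weight lam k) (xs k)) sequentially"
proof -
  define om where "om = (in_basis P W $ i $ j)\<^sup>2"
  have om: "0 < om" using Wij by (simp add: om_def)
  have "(\<lambda>k. (in_basis P (xs k) $ i $ j)\<^sup>2) \<longlonglongrightarrow> om"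
    unfolding om_def by (intro tendsto_intros tendsto_in_basis_entry xs)
  then have near: "eventually (\<lambda>k. om / 2 < (in_basis P (xs k) $ i $ j)\<^sup>2) sequentially"
    using om by (intro order_tendstoD(1)) auto
  obtain N :: nat where N: "\<bar>B\<bar> / (- lam j * (om / 2)) < real N"
    using reals_Archimedean2 by blast
  from near eventually_ge_at_top[of N] show ?thesis
  proof eventually_elim
    case (elim k)
    have c: "0 < - lam j * (om / 2)" using ij om by (simp add: mult_neg_pos)
    have "B < - lam j * (om / 2) * real N" using N c by (simp add: field_simps)
    also have "\<dots> \<le> - lam j * (om / 2) * real (Suc k)" using elim(2) c by (intro mult_left_mono) auto
    also have "\<dots> \<le> - lam j * real (Suc k) * (in_basis P (xs k) $ i $ j)\<^sup>2"
      using elim(1) ij by (simp add: mult_le_0_iff mult_left_mono mult.commute mult.left_commute)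
    also have "\<dots> \<le> weighted_sq P (penalty_weight lam k) (xs k)"
      using weighted_sq_entry_le[where c = "penalty_weight lam k" and P = P and H = "xs k" and i = i and j = j,
          OF penalty_weight_nonneg] ij
      by (simp add: penalty_weight_def min_def)
    finally show ?case .
  qed
qed

lemma eventually_half_sc_weighted_sq_on_gt:
  assumes xs: "xs \<longlonglongrightarrow> W" and W: "W \<in> sym_mats" "W \<notin> vanishing_on P (crit_pattern lam)"
  shows "eventually (\<lambda>k. ereal B < ereal (1/2) * weighted_sq_on P (both_neg (\<lambda>i. min (lam i) 0))
    (sc_weight (perturbed_eigs lam k) (\<lambda>i. min (lam i) 0)) (xs k)) sequentially"
proof -
  obtain i j where ij: "lam j < 0" "lam i \<le> 0" and Wij: "in_basis P W $ i $ j \<noteq> 0"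
    using W unfolding vanishing_on_def crit_pattern_def by blast
  show ?thesis
  proof (cases "lam i < 0")
    case True
    have "eventually (\<lambda>k. in_basis P (xs k) $ i $ j \<noteq> 0) sequentially"
      using tendsto_imp_eventually_ne[OF tendsto_in_basis_entry[OF xs] Wij] .
    then show ?thesis
    proof eventually_elim
      case (elim k)
      then have "xs k \<notin> vanishing_on P (both_neg (\<lambda>i. min (lam i) 0))"
        using True ij unfolding vanishing_on_def both_neg_def by (auto simp: min_less_iff_disj)
      then show ?case by (simp add: half_sc_weighted_sq_on_perturbed_eigs)
    qed
  next
    case False
    with ij have "lam i = 0" by simp
    from eventually_penalty_gt[OF xs this ij(1) Wij, of B] show ?thesis
    proof eventually_elim
      case (elim k)
      then have "B < weighted_sq P (sigma_weight lam) (xs k) + weighted_sq P (penalty_weight lam k) (xs k)"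
        using weighted_sq_nonneg[where c = "sigma_weight lam" and P = P and H = "xs k", OF sigma_weight_nonneg]
        by linarith
      then show ?case by (simp add: half_sc_weighted_sq_on_perturbed_eigs)
    qed
  qed
qed

lemma liminf_half_sc_weighted_sq_on_ge:
  assumes xs: "xs \<longlonglongrightarrow> W" and W: "W \<in> sym_mats"
  shows "weighted_sq_on P (crit_pattern lam) (sigma_weight lam) W \<le>
    liminf (\<lambda>k. ereal (1/2) * weighted_sq_on P (both_neg (\<lambda>i. min (lam i) 0))
      (sc_weight (perturbed_eigs lam k) (\<lambda>i. min (lam i) 0)) (xs k))"
  (is "_ \<le> liminf ?F")
  unfolding le_Liminf_iff
proof (intro allI impI)
  fix y assume y: "y < weighted_sq_on P (crit_pattern lam) (sigma_weight lam) W"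
  show "eventually (\<lambda>k. y < ?F k) sequentially"
  proof (cases "W \<in> vanishing_on P (crit_pattern lam)")
    case True
    have lower: "ereal (weighted_sq P (sigma_weight lam) (xs k)) \<le> ?F k" for k
      using weighted_sq_nonneg[where c = "penalty_weight lam k" and P = P and H = "xs k", OF penalty_weight_nonneg]
      by (simp add: half_sc_weighted_sq_on_perturbed_eigs)
    from True have "y < ereal (weighted_sq P (sigma_weight lam) W)" using y by (simp add: weighted_sq_on_def)
    with tendsto_weighted_sq[OF xs, THEN tendsto_ereal]
    have "eventually (\<lambda>k. y < ereal (weighted_sq P (sigma_weight lam) (xs k))) sequentially"
      by (rule order_tendstoD(1))
    then show ?thesis by (rule eventually_mono) (rule less_le_trans[OF _ lower])
  next
    case False
    then obtain B where B: "y < ereal B" using ereal_dense2[of y \<infinity>] y by (auto simp: weighted_sq_on_def)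
    from eventually_half_sc_weighted_sq_on_gt[OF xs W False, of B] show ?thesis
      by (rule eventually_mono) (rule less_trans[OF B])
  qed
qed

lemma epi_conv_half_sc_weighted_sq_on:
  fixes P :: "real^'n^'n"
  shows "epi_conv_seq sym_mats (\<lambda>k W. ereal (1/2) * weighted_sq_on P (both_neg (\<lambda>i. min (lam i) 0))
      (sc_weight (perturbed_eigs lam k) (\<lambda>i. min (lam i) 0)) W)
    (weighted_sq_on P (crit_pattern lam) (sigma_weight lam))"
  unfolding epi_conv_seq_def
proof (intro ballI conjI allI impI)
  fix W :: "real^'n^'n" and xs assume "W \<in> sym_mats" "(\<forall>k. xs k \<in> sym_mats) \<and> xs \<longlonglongrightarrow> W"
  then show "weighted_sq_on P (crit_pattern lam) (sigma_weight lam) W \<le>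
      liminf (\<lambda>k. ereal (1/2) * weighted_sq_on P (both_neg (\<lambda>i. min (lam i) 0))
        (sc_weight (perturbed_eigs lam k) (\<lambda>i. min (lam i) 0)) (xs k))"
    by (intro liminf_half_sc_weighted_sq_on_ge) auto
next
  fix W :: "real^'n^'n" assume W: "W \<in> sym_mats"
  have "ereal (1/2) * weighted_sq_on P (both_neg (\<lambda>i. min (lam i) 0))
      (sc_weight (perturbed_eigs lam k) (\<lambda>i. min (lam i) 0)) W \<le>
    weighted_sq_on P (crit_pattern lam) (sigma_weight lam) W" for k
    using vanishing_on_crit_pattern_subset[of P lam] penalty_vanishing_on_crit_pattern[of W P lam k]
    unfolding half_sc_weighted_sq_on_perturbed_eigs by (auto simp: weighted_sq_on_def)
  then show "\<exists>xs. (\<forall>k. xs k \<in> sym_mats) \<and> xs \<longlonglongrightarrow> W \<and>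
      limsup (\<lambda>k. ereal (1/2) * weighted_sq_on P (both_neg (\<lambda>i. min (lam i) 0))
        (sc_weight (perturbed_eigs lam k) (\<lambda>i. min (lam i) 0)) (xs k)) \<le>
      weighted_sq_on P (crit_pattern lam) (sigma_weight lam) W"
    using W by (intro exI[of _ "\<lambda>k. W"] conjI allI Limsup_bounded always_eventually) auto
qed

lemma tendsto_conj_perturbed_eigs:
  assumes P: "orthogonal_matrix P"
  shows "(\<lambda>k. P ** diag_mat (perturbed_eigs lam k) ** transpose P) \<longlonglongrightarrow>
    P ** diag_mat (\<lambda>i. max (lam i) 0) ** transpose P"
proof -
  define E where "E = P ** diag_mat (\<lambda>i. if lam i = 0 then 1 else 0) ** transpose P"
  have "P ** diag_mat (perturbed_eigs lam k) ** transpose P =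
      P ** diag_mat (\<lambda>i. max (lam i) 0) ** transpose P + inverse (real (Suc k)) *\<^sub>R E" for k
    by (rule in_basis_inj[OF P])
      (simp add: in_basis_add in_basis_scaleR in_basis_conj[OF P] E_def vec_eq_iff perturbed_eigs_def)
  moreover have "(\<lambda>k. P ** diag_mat (\<lambda>i. max (lam i) 0) ** transpose P + inverse (real (Suc k)) *\<^sub>R E)
      \<longlonglongrightarrow> P ** diag_mat (\<lambda>i. max (lam i) 0) ** transpose P + 0 *\<^sub>R E"
    by (intro tendsto_intros LIMSEQ_inverse_real_of_nat)
  ultimately show ?thesis by simp
qed

lemma quad_bundle_psd_indicator_complementary:
  assumes P: "orthogonal_matrix P"
  shows "weighted_sq_on P (crit_pattern lam) (sigma_weight lam) \<in> quad_bundle sym_mats (indicator_fun psd_cone)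
    (P ** diag_mat (\<lambda>i. max (lam i) 0) ** transpose P) (P ** diag_mat (\<lambda>i. min (lam i) 0) ** transpose P)"
proof -
  let ?Z = "\<lambda>k. P ** diag_mat (perturbed_eigs lam k) ** transpose P"
  let ?Y = "P ** diag_mat (\<lambda>i. min (lam i) 0) ** transpose P"
  note sc = strictly_complementary_perturbed_eigs
  have "epi_conv_seq sym_mats (\<lambda>k w. ereal (1/2) * second_subderiv sym_mats (indicator_fun psd_cone) (?Z k) ?Y w)
      (weighted_sq_on P (crit_pattern lam) (sigma_weight lam))"
    by (rule epi_conv_seq_cong[OF _ epi_conv_half_sc_weighted_sq_on])
      (simp add: second_subderiv_strictly_complementary[OF P sc])
  moreover have "gen_quad_form sym_mats (weighted_sq_on P (crit_pattern lam) (sigma_weight lam))"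
    by (rule gen_quad_form_weighted_sq_on[OF sigma_weight_nonneg]) simp
  ultimately show ?thesis
    unfolding quad_bundle_def
    using tendsto_conj_perturbed_eigs[OF P] gen_twice_diff_strictly_complementary[OF P sc]
    by (intro CollectI conjI exI[of _ ?Z] exI[of _ "\<lambda>k. ?Y"]) auto
qed

lemma weighted_sq_on_crit_pattern_eq:
  fixes P :: "real^'n^'n"
  assumes P: "orthogonal_matrix P" and H: "H \<in> sym_mats"
  shows "weighted_sq_on P (crit_pattern lam) (sigma_weight lam) H =
      ereal (- (1/2) * sigma_term (P ** diag_mat (\<lambda>i. max (lam i) 0) ** transpose P)
        (P ** diag_mat (\<lambda>i. min (lam i) 0) ** transpose P) H) + indicator_fun (aff_crit_cone P lam) H"
    and "weighted_sq_on P (crit_pattern lam) (sigma_weight lam) H =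
      ereal (\<Sum>i\<in>{i. lam i > 0}. \<Sum>j\<in>{j. lam j < 0}. (- lam j / lam i) * ((transpose P ** H ** P) $ i $ j)\<^sup>2)
      + indicator_fun (aff_crit_cone P lam) H"
proof -
  have "(\<Sum>i\<in>{i. lam i > 0}. \<Sum>j\<in>{j. lam j < 0}. (- lam j / lam i) * ((transpose P ** H ** P) $ i $ j)\<^sup>2)
      = weighted_sq P (sigma_weight lam) H"
  proof -
    have filter: "(\<Sum>i\<in>{i. Q i}. g i) = (\<Sum>i\<in>UNIV. if Q i then g i else 0)" for Q and g :: "'n \<Rightarrow> real"
      using sum.inter_filter[of UNIV g Q] by simp
    show ?thesis
      unfolding filter weighted_sq_def sigma_weight_def in_basis_def
      by (intro sum.cong refl) (auto intro!: sum.cong)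
  qed
  then show "weighted_sq_on P (crit_pattern lam) (sigma_weight lam) H =
      ereal (\<Sum>i\<in>{i. lam i > 0}. \<Sum>j\<in>{j. lam j < 0}. (- lam j / lam i) * ((transpose P ** H ** P) $ i $ j)\<^sup>2)
      + indicator_fun (aff_crit_cone P lam) H"
    by (simp add: weighted_sq_on_def aff_crit_cone_eq indicator_fun_def)
  show "weighted_sq_on P (crit_pattern lam) (sigma_weight lam) H =
      ereal (- (1/2) * sigma_term (P ** diag_mat (\<lambda>i. max (lam i) 0) ** transpose P)
        (P ** diag_mat (\<lambda>i. min (lam i) 0) ** transpose P) H) + indicator_fun (aff_crit_cone P lam) H"
    unfolding sigma_term_complementary_pair[OF P H]
    by (simp add: weighted_sq_on_def aff_crit_cone_eq indicator_fun_def weighted_sq_def sigma_weight_def)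
qed

theorem proposition3p2:
  fixes f :: "'a::euclidean_space \<Rightarrow> real"
    and G :: "'a \<Rightarrow> real^'n^'n"
    and xb :: 'a and Yb P :: "real^'n^'n" and lam :: "'n \<Rightarrow> real"
  assumes "C2 f" and "C2 G" and "\<forall>x. G x \<in> sym_mats"
    and "stationary f G xb" and "Yb \<in> multipliers f G xb"
    and "orthogonal_matrix P"
    and "G xb + Yb = P ** diag_mat lam ** transpose P"
  shows "\<exists>q \<in> quad_bundle sym_mats (indicator_fun psd_cone) (G xb) Yb.
     \<forall>H \<in> sym_mats.
       q H = ereal (- (1/2) * sigma_term (G xb) Yb H) + indicator_fun (aff_crit_cone P lam) H \<and>
       q H = ereal (\<Sum>i\<in>{i. lam i > 0}. \<Sum>j\<in>{j. lam j < 0}.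
                      (- lam j / lam i) * ((transpose P ** H ** P) $ i $ j)\<^sup>2)
             + indicator_fun (aff_crit_cone P lam) H"
proof -
  note P = \<open>orthogonal_matrix P\<close>
  have "G xb \<in> psd_cone" "Yb \<in> nsd_cone" "G xb \<bullet> Yb = 0"
    using \<open>Yb \<in> multipliers f G xb\<close> unfolding multipliers_def by auto
  note in_basis = complementary_pair_in_basis[OF P this \<open>G xb + Yb = _\<close>]
  have "G xb = P ** diag_mat (\<lambda>i. max (lam i) 0) ** transpose P"
    using conj_in_basis[OF P, of "G xb"] in_basis(1) by simp
  moreover have "Yb = P ** diag_mat (\<lambda>i. min (lam i) 0) ** transpose P"
    using conj_in_basis[OF P, of Yb] in_basis(2) by simp
  ultimately show ?thesis
    using quad_bundle_psd_indicator_complementary[OF P] weighted_sq_on_crit_pattern_eq[OF P]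
    by (intro bexI[of _ "weighted_sq_on P (crit_pattern lam) (sigma_weight lam)"]) auto
qed

end
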